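(* Let $d\ge 2$, $\bm{\mu}\in\mathbb{R}^d$, let $\bm{\Sigma}$ be a positive definite $d\times d$ matrix, $\bm{e}=(1,\dots,1)^\top\in\mathbb{R}^d$, and assume $\bm{\mu}\neq c\,\bm{e}$ for every $c\in\mathbb{R}$. Let $t,\nu\in\mathbb{R}$. Let $\mathcal{M}_S(\bm{\mu},\bm{\Sigma})$ be the set of probability distributions $G$ on $\mathbb{R}^d$ of a random vector $\bm{X}$ with $\mathbb{E}^G[\bm{X}]=\bm{\mu}$, $\mathrm{Cov}^G[\bm{X}]=\bm{\Sigma}$, and $G$ symmetric. Let $\mathcal{W}=\{\bm{w}\in\mathbb{R}^d:\bm{w}^\top\bm{e}=1\}$ and consider the problem \[ \min_{\bm{w}\in\mathcal{W}}\ \sup_{G\in\mathcal{M}_S(\bm{\mu},\bm{\Sigma})}\mathbb{E}^G[(\bm{w}^\top\bm{X}-t)_+^2]\quad\text{s.t.}\quad \bm{w}^\top\bm{\mu}\le\nu. \] Define $u=(\bm{e}^\top\bm{\Sigma}^{-1}\bm{e})(\bm{\mu}^\top\bm{\Sigma}^{-1}\bm{\mu})-(\bm{e}^\top\bm{\Sigma}^{-1}\bm{\mu})^2$, $v_0=\bm{e}^\top\bm{\Sigma}^{-1}\bm{e}/u$, $v_1=\bm{e}^\top\bm{\Sigma}^{-1}\bm{\mu}/u$, $v_2=\bm{\mu}^\top\bm{\Sigma}^{-1}\bm{\mu}/u$. For $a\in\mathbb{R}$, $s>0$ let $h_{S,t}(a,s)=\sup_{F\in\mathcal{L}_S(a,s)}\mathbb{E}^F[(X-t)_+^2]$,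 and set $\phi(\xi)=h_{S,t}\big(\xi,\sqrt{v_0\xi^2-2v_1\xi+v_2}\big)$. Let $\xi_1^*=\min\{v_1/v_0,\,t\}$ and $h^1=\frac12\big(v_0(\xi_1^* )^2-2v_1\xi_1^*+v_2\big)$; when $t<\nu$ let $\xi_2^*=\arg\min_{t\le\xi\le\nu}\phi(\xi)$ and $h^2=\phi(\xi_2^* )$. Then the problem has a unique solution \[ \bm{w}^*_{S,\nu,t}=(\bm{\Sigma}^{-1}\bm{\mu},\ \bm{\Sigma}^{-1}\bm{e})\begin{pmatrix} v_0 & -v_1\\ -v_1 & v_2\end{pmatrix}\begin{pmatrix}\xi^*\\ 1\end{pmatrix}, \] where: (i) if $t\ge\nu$, $\xi^*=\min\{v_1/v_0,\nu\}$; (ii) if $t<\nu$ and $h^1\le h^2$, $\xi^*=\min\{v_1/v_0,t\}$; (iii) if $t<\nu$ and $h^1>h^2$, $\xi^*=\xi_2^*=\arg\min_{t\le\xi\le\nu}\phi(\xi)$.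
   Context: For $x\in\mathbb{R}$, $(x)_+=\max\{x,0\}$. For $a\in\mathbb{R}$ and $s>0$, $\mathcal{L}_S(a,s)$ is the set of symmetric probability distributions $F$ on $\mathbb{R}$ with $\mathbb{E}^F[X]=a$ and $\mathbb{E}^F[X^2]=a^2+s^2$; a distribution of a real random variable $X$ is symmetric if there is $b\in\mathbb{R}$ with $\mathbb{P}(X-b>x)=\mathbb{P}(X-b<-x)$ for all $x$. A distribution $G$ of a random vector $\bm{X}\in\mathbb{R}^d$ is symmetric if there is $\bm{a}\in\mathbb{R}^d$ with $\mathbb{P}(\bm{X}-\bm{a}\in B)=\mathbb{P}(\bm{X}-\bm{a}\in -B)$ for all Borel $B\subseteq\mathbb{R}^d$, where $-B=\{\bm{x}:-\bm{x}\in B\}$. *)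

theory Defs
  imports "HOL-Analysis.Analysis" "HOL-Probability.Probability"
begin

definition pos_def_mat :: "real^'n^'n \<Rightarrow> bool" where
  "pos_def_mat S \<longleftrightarrow> transpose S = S \<and> (\<forall>x. x \<noteq> 0 \<longrightarrow> x \<bullet> (S *v x) > 0)"

definition LS :: "real \<Rightarrow> real \<Rightarrow> real measure set" where
  "LS a s = {F. prob_space F \<and> sets F = sets borel \<and>
      integrable F (\<lambda>x. x) \<and> integrable F (\<lambda>x. x^2) \<and>
      (\<integral>x. x \<partial>F) = a \<and> (\<integral>x. x^2 \<partial>F) = a^2 + s^2 \<and>
      (\<exists>b. \<forall>x. measure F {y. y - b > x} = measure F {y. y - b < - x})}"

definition hS :: "real \<Rightarrow> real \<Rightarrow> real \<Rightarrow> real" where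
  "hS t a s = Sup {(\<integral>x. (max (x - t) 0)^2 \<partial>F) | F. F \<in> LS a s}"

definition MS :: "real^'n \<Rightarrow> real^'n^'n \<Rightarrow> (real^'n) measure set" where
  "MS mu S = {G. prob_space G \<and> sets G = sets borel \<and>
      (\<forall>i. integrable G (\<lambda>x. x$i) \<and> (\<integral>x. x$i \<partial>G) = mu$i) \<and>
      (\<forall>i j. integrable G (\<lambda>x. x$i * x$j) \<and>
             (\<integral>x. x$i * x$j \<partial>G) - mu$i * mu$j = S$i$j) \<and>
      (\<exists>a. \<forall>B \<in> sets borel. measure G {x. x - a \<in> B} = measure G {x. x - a \<in> uminus ` B})}"

definition worst_obj :: "real^'n \<Rightarrow> real^'n^'n \<Rightarrow> real \<Rightarrow> real^'n \<Rightarrow> real" where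
  "worst_obj mu S t w = Sup {(\<integral>x. (max (w \<bullet> x - t) 0)^2 \<partial>G) | G. G \<in> MS mu S}"

definition feasible :: "real^'n \<Rightarrow> real \<Rightarrow> real^'n \<Rightarrow> bool" where
  "feasible mu nu w \<longleftrightarrow> w \<bullet> vec 1 = 1 \<and> w \<bullet> mu \<le> nu"

definition optimal :: "real^'n \<Rightarrow> real^'n^'n \<Rightarrow> real \<Rightarrow> real \<Rightarrow> real^'n \<Rightarrow> bool" where
  "optimal mu S t nu w \<longleftrightarrow> feasible mu nu w \<and>
     (\<forall>w'. feasible mu nu w' \<longrightarrow> worst_obj mu S t w \<le> worst_obj mu S t w')"

definition uq :: "real^'n \<Rightarrow> real^'n^'n \<Rightarrow> real" where
  "uq mu S = (vec 1 \<bullet> (matrix_inv S *v vec 1)) * (mu \<bullet> (matrix_inv S *v mu))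
             - (vec 1 \<bullet> (matrix_inv S *v mu))^2"
definition v0 :: "real^'n \<Rightarrow> real^'n^'n \<Rightarrow> real" where
  "v0 mu S = (vec 1 \<bullet> (matrix_inv S *v vec 1)) / uq mu S"
definition v1 :: "real^'n \<Rightarrow> real^'n^'n \<Rightarrow> real" where
  "v1 mu S = (vec 1 \<bullet> (matrix_inv S *v mu)) / uq mu S"
definition v2 :: "real^'n \<Rightarrow> real^'n^'n \<Rightarrow> real" where
  "v2 mu S = (mu \<bullet> (matrix_inv S *v mu)) / uq mu S"

definition phi :: "real^'n \<Rightarrow> real^'n^'n \<Rightarrow> real \<Rightarrow> real \<Rightarrow> real" where
  "phi mu S t \<xi> = hS t \<xi> (sqrt (v0 mu S * \<xi>^2 - 2 * v1 mu S * \<xi> + v2 mu S))"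

text \<open>(Sigma^{-1} mu, Sigma^{-1} e) [[v0,-v1],[-v1,v2]] (xi,1)^T, multiplied out.\<close>
definition w_of :: "real^'n \<Rightarrow> real^'n^'n \<Rightarrow> real \<Rightarrow> real^'n" where
  "w_of mu S \<xi> = (v0 mu S * \<xi> - v1 mu S) *\<^sub>R (matrix_inv S *v mu)
                 + (- v1 mu S * \<xi> + v2 mu S) *\<^sub>R (matrix_inv S *v vec 1)"

definition h1 :: "real^'n \<Rightarrow> real^'n^'n \<Rightarrow> real \<Rightarrow> real" where
  "h1 mu S t = (let \<xi> = min (v1 mu S / v0 mu S) t in
       (v0 mu S * \<xi>^2 - 2 * v1 mu S * \<xi> + v2 mu S) / 2)"

text \<open>h2 = min of phi over [t,nu] (attainment is part of the theorem).\<close>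
definition h2 :: "real^'n \<Rightarrow> real^'n^'n \<Rightarrow> real \<Rightarrow> real \<Rightarrow> real" where
  "h2 mu S t nu = Inf (phi mu S t ` {t..nu})"

end

theory Submission
  imports Defs
begin

text \<open>
  For a portfolio \<open>w\<close> with \<open>w \<bullet> 1 = 1\<close>, the worst case over \<open>MS mu S\<close> depends only on the
  mean \<open>a = w \<bullet> mu\<close> and the standard deviation \<open>s = sqrt (w \<bullet> (S *v w))\<close> of \<open>w \<bullet> X\<close>: it equals
  \<open>worst_sym (a - t) s\<close>, where \<open>worst_sym k s = s\<^sup>2 + k\<^sub>+\<^sup>2 - (s - k\<^sub>+)\<^sub>+\<^sup>2 / 2\<close>, and so does
  \<open>hS t a s\<close>. The upper bound comes from an even quadratic majorant of the symmetrised payoff; it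
  is approached by symmetric three-point laws, which lift to \<open>\<real>\<^sup>d\<close> by adding independent symmetric
  noise orthogonal to \<open>w\<close>.

  Since \<open>worst_sym\<close> is strictly increasing in \<open>s\<close>, only the minimum-variance portfolio
  \<open>w_of mu S \<xi>\<close> of each mean \<open>\<xi>\<close> can be optimal, and the problem becomes minimising \<open>phi mu S t\<close>
  over \<open>\<xi> \<le> nu\<close>. As \<open>worst_sym\<close> is convex and increasing in \<open>s\<close> and the frontier standard
  deviation is strictly convex in \<open>\<xi>\<close>, \<open>phi\<close> is strictly convex and its minimiser is unique.
  Below \<open>t\<close>, \<open>phi\<close> is half the frontier variance, a parabola with vertex \<open>v1 / v0\<close>, which gives
  the three cases.
\<close>

section \<open>Positive semidefinite matrices\<close>

lemma inner_matrix_vector_commute: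
  fixes A :: "real^'n^'n"
  assumes "transpose A = A"
  shows "x \<bullet> (A *v y) = y \<bullet> (A *v x)"
proof -
  have "x \<bullet> (A *v y) = (transpose A *v x) \<bullet> y" by (simp add: dot_lmul_matrix)
  then show ?thesis using assms by (simp add: inner_commute)
qed

lemma transpose_minus: "transpose (A - B) = transpose A - (transpose B :: 'a::ab_group_add^'n^'m)"
  by (simp add: transpose_def vec_eq_iff)

lemma matrix_entry_eq_inner_axis: "axis i 1 \<bullet> (C *v axis j 1) = (C::real^'n^'n) $ i $ j"
  by (simp add: inner_axis' matrix_vector_mult_basis column_def)

definition psd :: "real^'n^'n \<Rightarrow> bool" where
  "psd C \<longleftrightarrow> transpose C = C \<and> (\<forall>x. x \<bullet> (C *v x) \<ge> 0)"

lemma pos_def_mat_imp_psd: "pos_def_mat S \<Longrightarrow> psd S"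
  unfolding pos_def_mat_def psd_def by (metis inner_zero_left less_eq_real_def)

lemma psd_Cauchy_Schwarz:
  assumes "psd C"
  shows "(x \<bullet> (C *v y))^2 \<le> (x \<bullet> (C *v x)) * (y \<bullet> (C *v y))"
proof -
  have sym: "y \<bullet> (C *v x) = x \<bullet> (C *v y)"
    using assms inner_matrix_vector_commute unfolding psd_def by metis
  have nonneg: "z \<bullet> (C *v z) \<ge> 0" for z using assms unfolding psd_def by auto
  define a b c where "a = x \<bullet> (C *v x)" and "b = x \<bullet> (C *v y)" and "c = y \<bullet> (C *v y)"
  have quadratic: "a + 2 * l * b + l^2 * c \<ge> 0" for l
  proof -
    have "(x + l *\<^sub>R y) \<bullet> (C *v (x + l *\<^sub>R y)) = a + 2 * l * b + l^2 * c"
      unfolding a_def b_def c_def using sym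
      by (simp add: algebra_simps power2_eq_square)
    then show ?thesis using nonneg by metis
  qed
  show ?thesis
  proof (cases "c = 0")
    case True
    with quadratic[of "-(a + 1) / (2 * b)"] have "b = 0"
      by (cases "b = 0") (simp_all add: field_simps)
    then show ?thesis using True unfolding a_def b_def c_def by simp
  next
    case False
    then have "c > 0" using nonneg unfolding c_def by (metis less_eq_real_def)
    with quadratic[of "-b / c"] have "b^2 \<le> a * c" by (simp add: power2_eq_square field_simps)
    then show ?thesis unfolding a_def b_def c_def .
  qed
qed

lemma psd_diag_nonneg: "psd C \<Longrightarrow> C $ i $ i \<ge> 0"
  using matrix_entry_eq_inner_axis[of i C i] unfolding psd_def by metis

lemma psd_diag_zero_imp_row_zero: "psd C \<Longrightarrow> C $ i $ i = 0 \<Longrightarrow> C $ i $ j = 0"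
  using psd_Cauchy_Schwarz[of C "axis i 1" "axis j 1"] matrix_entry_eq_inner_axis[of _ C]
  by simp

definition outer :: "real^'n \<Rightarrow> real^'n^'n" where
  "outer v = (\<chi> i j. v $ i * v $ j)"

definition outer_sum :: "nat \<Rightarrow> (nat \<Rightarrow> real^'n) \<Rightarrow> real^'n^'n" where
  "outer_sum m c = (\<chi> i j. \<Sum>l<m. c l $ i * c l $ j)"

lemma transpose_outer: "transpose (outer v) = outer v"
  by (simp add: outer_def transpose_def vec_eq_iff mult.commute)

lemma inner_outer: "x \<bullet> (outer v *v x) = (v \<bullet> x)^2"
proof -
  have "x \<bullet> (outer v *v x) = (\<Sum>i\<in>UNIV. \<Sum>j\<in>UNIV. (v$i * x$i) * (v$j * x$j))"
    by (simp add: outer_def inner_vec_def matrix_vector_mult_def sum_distrib_left mult_ac)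
  also have "\<dots> = (v \<bullet> x)^2" by (simp add: sum_product inner_vec_def power2_eq_square)
  finally show ?thesis .
qed

lemma outer_sum_0: "outer_sum 0 c = 0"
  by (simp add: outer_sum_def vec_eq_iff)

lemma outer_sum_Suc: "outer_sum (Suc m) c = outer_sum m c + outer (c m)"
  by (simp add: outer_sum_def outer_def vec_eq_iff)

lemma outer_sum_cong: "(\<And>l. l < m \<Longrightarrow> c l = c' l) \<Longrightarrow> outer_sum m c = outer_sum m c'"
  unfolding outer_sum_def by (intro arg_cong[where f=vec_lambda] ext sum.cong) auto

lemma inner_outer_sum: "x \<bullet> (outer_sum m c *v x) = (\<Sum>l<m. (c l \<bullet> x)^2)"
  by (induction m)
    (simp_all add: outer_sum_0 outer_sum_Suc matrix_vector_mult_add_rdistrib inner_add_right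
      inner_outer)

lemma psd_minus_outer_pivot:
  assumes C: "psd C" and pivot: "C $ i $ i > 0"
  defines "c \<equiv> (1 / sqrt (C $ i $ i)) *\<^sub>R (C *v axis i 1)"
  shows "psd (C - outer c)" "{j. (C - outer c) $ j $ j \<noteq> 0} \<subseteq> {j. C $ j $ j \<noteq> 0} - {i}"
proof -
  have c_entry: "c $ a = C $ a $ i / sqrt (C $ i $ i)" for a
    unfolding c_def by (simp add: matrix_vector_mult_basis column_def)
  have entry: "(C - outer c) $ a $ b = C $ a $ b - C $ a $ i * C $ b $ i / C $ i $ i" for a b
    unfolding outer_def using pivot by (simp add: c_entry real_sqrt_mult[symmetric])
  show "psd (C - outer c)"
    unfolding psd_def
  proof (intro conjI allI)
    show "transpose (C - outer c) = C - outer c"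
      using C transpose_outer[of c] unfolding psd_def by (simp add: transpose_minus)
    fix x
    have "(c \<bullet> x)^2 = (x \<bullet> (C *v axis i 1))^2 / C $ i $ i"
      unfolding c_def using pivot by (simp add: power2_eq_square inner_commute)
    also have "\<dots> \<le> x \<bullet> (C *v x)"
      using psd_Cauchy_Schwarz[OF C, of x "axis i 1"] matrix_entry_eq_inner_axis[of i C i] pivot
      by (simp add: divide_le_eq)
    finally show "0 \<le> x \<bullet> ((C - outer c) *v x)"
      by (simp add: matrix_vector_mult_diff_rdistrib inner_diff_right inner_outer)
  qed
  show "{j. (C - outer c) $ j $ j \<noteq> 0} \<subseteq> {j. C $ j $ j \<noteq> 0} - {i}"
    using pivot psd_diag_zero_imp_row_zero[OF C] unfolding entry by auto
qed

text \<open>Symmetric Gaussian elimination, pivoting on a nonzero diagonal entry.\<close>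

lemma psd_eq_outer_sum: "psd C \<Longrightarrow> \<exists>m c. C = outer_sum m c"
proof (induction "card {i. C $ i $ i \<noteq> 0}" arbitrary: C rule: less_induct)
  case less
  show ?case
  proof (cases "\<forall>i. C $ i $ i = 0")
    case True
    then have "C = outer_sum 0 c" for c
      using psd_diag_zero_imp_row_zero[OF less.prems] by (simp add: outer_sum_0 vec_eq_iff)
    then show ?thesis by blast
  next
    case False
    then obtain i where "C $ i $ i \<noteq> 0" by blast
    with psd_diag_nonneg[OF less.prems] have pivot: "C $ i $ i > 0"
      by (metis less_eq_real_def)
    define c where "c = (1 / sqrt (C $ i $ i)) *\<^sub>R (C *v axis i 1)"
    note reduced = psd_minus_outer_pivot[OF less.prems pivot, folded c_def]
    have "card {j. (C - outer c) $ j $ j \<noteq> 0} \<le> card ({j. C $ j $ j \<noteq> 0} - {i})"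
      using reduced(2) by (intro card_mono) auto
    also have "\<dots> < card {j. C $ j $ j \<noteq> 0}"
      using pivot by (intro card_Diff1_less) auto
    finally obtain m c' where "C - outer c = outer_sum m c'"
      using less.hyps reduced(1) by blast
    then have "C = outer_sum (Suc m) (c'(m := c))"
      using outer_sum_cong[of m "c'(m := c)" c'] by (simp add: outer_sum_Suc algebra_simps)
    then show ?thesis by blast
  qed
qed

lemma pos_def_split_along:
  assumes "pos_def_mat S" and \<sigma>: "\<sigma> = w \<bullet> (S *v w)" "\<sigma> > 0"
  obtains m c where "m > 0" "\<forall>l<m. c l \<bullet> w = 0"
    "S = (1 / \<sigma>) *\<^sub>R outer (S *v w) + outer_sum m c"
proof -
  define C where "C = S - (1 / \<sigma>) *\<^sub>R outer (S *v w)"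
  have S: "psd S" using assms(1) by (rule pos_def_mat_imp_psd)
  have C_quad: "x \<bullet> (C *v x) = x \<bullet> (S *v x) - ((S *v w) \<bullet> x)^2 / \<sigma>" for x
    unfolding C_def
    by (simp add: matrix_vector_mult_diff_rdistrib scaleR_matrix_vector_assoc[symmetric]
        inner_diff_right inner_outer)
  have "psd C"
    unfolding psd_def
  proof (intro conjI allI)
    show "transpose C = C"
      using S unfolding C_def psd_def by (simp add: transpose_minus transpose_scalar transpose_outer)
    fix x
    have "(x \<bullet> (S *v w))^2 \<le> (x \<bullet> (S *v x)) * \<sigma>"
      unfolding \<sigma>(1) by (rule psd_Cauchy_Schwarz[OF S])
    then show "0 \<le> x \<bullet> (C *v x)"
      using \<sigma>(2) by (simp add: C_quad divide_le_eq inner_commute)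
  qed
  then obtain m c where "C = outer_sum m c" using psd_eq_outer_sum by blast
  \<comment> \<open>pad with a zero vector, so that \<open>m > 0\<close> as needed to sample uniformly from \<open>{..<m}\<close>\<close>
  then have C: "C = outer_sum (Suc m) (c(m := 0))"
    using outer_sum_cong[of m "c(m := 0)" c] by (simp add: outer_sum_Suc outer_def vec_eq_iff)
  have "w \<bullet> (C *v w) = 0"
    using \<sigma> by (simp add: C_quad inner_commute power2_eq_square)
  then have "\<forall>l<Suc m. (c(m := 0)) l \<bullet> w = 0"
    unfolding C inner_outer_sum by (subst (asm) sum_nonneg_eq_0_iff) auto
  moreover have "S = (1 / \<sigma>) *\<^sub>R outer (S *v w) + outer_sum (Suc m) (c(m := 0))"
    using C unfolding C_def by (metis add.commute diff_add_cancel)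
  ultimately show thesis by (intro that) auto
qed

section \<open>The worst case over symmetric laws with a given variance\<close>

definition sq_pos_part :: "real \<Rightarrow> real" where
  "sq_pos_part y = (max y 0)^2"

definition worst_sym :: "real \<Rightarrow> real \<Rightarrow> real" where
  "worst_sym k s = s^2 + (max k 0)^2 - (max (s - max k 0) 0)^2 / 2"

text \<open>The even quadratic \<open>y \<mapsto> worst_sym k s + majorant_slope k s * (y\<^sup>2 - s\<^sup>2)\<close> dominates the
  symmetrisation of \<open>y \<mapsto> sq_pos_part (k + y)\<close> and touches it on the support of the extremal laws.\<close>

definition majorant_slope :: "real \<Rightarrow> real \<Rightarrow> real" where
  "majorant_slope k s = (if k \<le> 0 then 1/2 else if k \<le> s then (1 + k/s)/2 else 1)"

text \<open>The value of \<open>E (k + Y)\<^sub>+\<^sup>2\<close> for the symmetric law of variance \<open>s\<^sup>2\<close> with mass \<open>1 - q\<^sup>2\<close> at \<open>0\<close>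
  and \<open>q\<^sup>2/2\<close> at \<open>\<plusminus>s/q\<close>.\<close>

definition three_point_value :: "real \<Rightarrow> real \<Rightarrow> real \<Rightarrow> real" where
  "three_point_value q k s =
     (1 - q^2) * sq_pos_part k + q^2/2 * (sq_pos_part (k + s/q) + sq_pos_part (k - s/q))"

lemma sq_pos_part_nonneg: "sq_pos_part y \<ge> 0"
  unfolding sq_pos_part_def by simp

lemma sq_pos_part_le: "sq_pos_part (y + k) \<le> 2 * y^2 + 2 * k^2"
proof -
  have "sq_pos_part (y + k) \<le> (y + k)^2" unfolding sq_pos_part_def by (simp add: max_def)
  also have "\<dots> \<le> 2 * y^2 + 2 * k^2"
    using sum_squares_ge_zero[of "y - k" 0] by (simp add: power2_eq_square algebra_simps)
  finally show ?thesis .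
qed

lemma sq_pos_part_midpoint_convex: "sq_pos_part ((a + b)/2) \<le> (sq_pos_part a + sq_pos_part b)/2"
proof -
  have "sq_pos_part ((a + b)/2) \<le> ((max a 0 + max b 0)/2)^2"
    unfolding sq_pos_part_def by (intro power_mono) (auto simp: max_def)
  also have "\<dots> \<le> (sq_pos_part a + sq_pos_part b)/2"
    unfolding sq_pos_part_def using sum_squares_ge_zero[of "max a 0 - max b 0" 0]
    by (simp add: power2_eq_square field_simps)
  finally show ?thesis .
qed

lemma borel_measurable_sq_pos_part [measurable]: "sq_pos_part \<in> borel_measurable borel"
  unfolding sq_pos_part_def by measurable

lemma worst_sym_nonpos: "k \<le> 0 \<Longrightarrow> s \<ge> 0 \<Longrightarrow> worst_sym k s = s^2/2"
  unfolding worst_sym_def by (simp add: max_def)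

lemma worst_sym_pos_le: "0 < k \<Longrightarrow> k \<le> s \<Longrightarrow> worst_sym k s = (s + k)^2/2"
  unfolding worst_sym_def by (simp add: max_def power2_eq_square field_simps)

lemma worst_sym_pos_ge: "0 < k \<Longrightarrow> s \<le> k \<Longrightarrow> worst_sym k s = s^2 + k^2"
  unfolding worst_sym_def by (simp add: max_def)

lemma sq_pos_part_sym_le_majorant_middle:
  assumes k: "0 < k" "k \<le> s" and z: "z \<ge> 0"
  shows "(sq_pos_part (k + z) + sq_pos_part (k - z)) * s \<le> (s + k)^2 * s + (s + k) * (z^2 - s^2)"
proof (cases "z \<ge> k")
  case True
  then have sum: "sq_pos_part (k + z) + sq_pos_part (k - z) = (k + z)^2"
    unfolding sq_pos_part_def using k z by (simp add: max_def)
  have "(s + k)^2 * s + (s + k) * (z^2 - s^2) - (k + z)^2 * s = k * (z - s)^2"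
    by (simp add: power2_eq_square algebra_simps)
  moreover have "k * (z - s)^2 \<ge> 0" using k by simp
  ultimately show ?thesis unfolding sum by linarith
next
  case False
  then have sum: "sq_pos_part (k + z) + sq_pos_part (k - z) = (k + z)^2 + (k - z)^2"
    unfolding sq_pos_part_def using k z by (simp add: max_def)
  have "(s + k)^2 * s + (s + k) * (z^2 - s^2) - ((k + z)^2 + (k - z)^2) * s
          = (s - k) * (k * s - z^2)"
    by (simp add: power2_eq_square algebra_simps)
  moreover have "z * z \<le> k * s" using False z k by (intro mult_mono) auto
  then have "(s - k) * (k * s - z^2) \<ge> 0" using k by (simp add: power2_eq_square)
  ultimately show ?thesis unfolding sum by linarith
qed

lemma sq_pos_part_sym_le_majorant:
  assumes s: "s > 0"
  shows "(sq_pos_part (k + y) + sq_pos_part (k - y)) / 2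
           \<le> worst_sym k s + majorant_slope k s * (y^2 - s^2)"
proof -
  have "(sq_pos_part (k + z) + sq_pos_part (k - z)) / 2
          \<le> worst_sym k s + majorant_slope k s * (z^2 - s^2)" if z: "z \<ge> 0" for z
  proof -
    consider "k \<le> 0" | "0 < k" "k \<le> s" | "s < k" using s by linarith
    then show ?thesis
    proof cases
      case 1
      have "sq_pos_part (k + z) \<le> z^2" unfolding sq_pos_part_def using 1 z
        by (simp add: max_def power_mono)
      moreover have "sq_pos_part (k - z) = 0"
        unfolding sq_pos_part_def using 1 z by (simp add: max_def)
      ultimately show ?thesis
        using 1 s by (simp add: worst_sym_nonpos majorant_slope_def field_simps)
    next
      case 2
      then have "(sq_pos_part (k + z) + sq_pos_part (k - z)) / 2
                   \<le> ((s + k)^2 * s + (s + k) * (z^2 - s^2)) / (2 * s)"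
        using sq_pos_part_sym_le_majorant_middle[OF 2 z] s by (simp add: field_simps)
      also have "\<dots> = worst_sym k s + majorant_slope k s * (z^2 - s^2)"
        using 2 s by (simp add: worst_sym_pos_le majorant_slope_def field_simps power2_eq_square)
      finally show ?thesis .
    next
      case 3
      have "sq_pos_part (k + z) + sq_pos_part (k - z) \<le> (k + z)^2 + (k - z)^2"
        unfolding sq_pos_part_def by (intro add_mono) (simp_all add: max_def)
      then show ?thesis using 3 s
        by (simp add: worst_sym_pos_ge majorant_slope_def power2_eq_square algebra_simps)
    qed
  qed
  moreover have "sq_pos_part (k + y) + sq_pos_part (k - y)
                   = sq_pos_part (k + \<bar>y\<bar>) + sq_pos_part (k - \<bar>y\<bar>)"
    by (cases "y \<ge> 0") simp_all
  ultimately show ?thesis by (metis abs_ge_zero power2_abs)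
qed

lemma three_point_value_le_worst_sym:
  assumes q: "0 < q" "q \<le> 1" and s: "s > 0"
  shows "three_point_value q k s \<le> worst_sym k s"
proof -
  let ?M = "\<lambda>y. worst_sym k s + majorant_slope k s * (y^2 - s^2)"
  have at_0: "sq_pos_part k \<le> ?M 0"
    using sq_pos_part_sym_le_majorant[OF s, of k 0] by simp
  have "three_point_value q k s
          = (1 - q^2) * sq_pos_part k + q^2 * ((sq_pos_part (k + s/q) + sq_pos_part (k - s/q)) / 2)"
    unfolding three_point_value_def by simp
  also have "\<dots> \<le> (1 - q^2) * ?M 0 + q^2 * ?M (s/q)"
    using q at_0 sq_pos_part_sym_le_majorant[OF s, of k "s/q"]
    by (intro add_mono mult_left_mono) (auto simp: power_le_one)
  also have "\<dots> = worst_sym k s" using q by (simp add: power2_eq_square field_simps)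
  finally show ?thesis .
qed

text \<open>For \<open>k > 0\<close> the two-point law (\<open>q = 1\<close>) is extremal; for \<open>k \<le> 0\<close> the value \<open>s\<^sup>2/2\<close> is
  only approached as \<open>q \<rightarrow> 0\<close>.\<close>

lemma three_point_value_approx:
  assumes s: "s > 0" and \<epsilon>: "\<epsilon> > 0"
  obtains q where "0 < q" "q \<le> 1" "three_point_value q k s > worst_sym k s - \<epsilon>"
proof (cases "k > 0")
  case True
  have "three_point_value 1 k s = worst_sym k s"
  proof (cases "k \<le> s")
    case True
    then show ?thesis using \<open>k > 0\<close> unfolding three_point_value_def sq_pos_part_def
      by (simp add: worst_sym_pos_le max_def)
  next
    case False
    then show ?thesis using \<open>k > 0\<close> s unfolding three_point_value_def sq_pos_part_def
      by (simp add: worst_sym_pos_ge max_def power2_eq_square field_simps)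
  qed
  then show thesis using \<epsilon> by (intro that[of 1]) auto
next
  case False
  define q where "q = min 1 (min (s / (1 - k)) (\<epsilon> / (1 - k * s)))"
  have "k * s \<le> 0" using False s mult_nonpos_nonneg[of k s] by simp
  then have pos: "1 - k > 0" "1 - k * s > 0" using False by simp_all
  have q: "0 < q" "q \<le> 1" "q * (- k) < s" "q * (- k) * s < \<epsilon>"
  proof -
    show "0 < q" "q \<le> 1" unfolding q_def using pos s \<epsilon> by simp_all
    have "q * (- k) \<le> s / (1 - k) * (- k)"
      unfolding q_def using False by (intro mult_right_mono) auto
    also have "\<dots> < s" using pos s by (simp add: field_simps)
    finally show "q * (- k) < s" .
    have "q * (- k) * s = q * (- k * s)" by simp
    also have "\<dots> \<le> \<epsilon> / (1 - k * s) * (- k * s)"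
      unfolding q_def using \<open>k * s \<le> 0\<close> by (intro mult_right_mono) auto
    also have "\<dots> < \<epsilon>" using pos \<epsilon> by (simp add: field_simps)
    finally show "q * (- k) * s < \<epsilon>" .
  qed
  have "k * q \<le> 0" using False q mult_nonpos_nonneg[of k q] by simp
  then have "three_point_value q k s = q^2/2 * (k + s/q)^2"
    unfolding three_point_value_def sq_pos_part_def using False q s
    by (simp add: max_def field_simps)
  also have "\<dots> = (s + q * k)^2/2" using q by (simp add: power2_eq_square field_simps)
  also have "\<dots> \<ge> s^2/2 - q * (- k) * s"
    using zero_le_square[of "q * k"] by (simp add: power2_eq_square algebra_simps)
  finally have "three_point_value q k s > s^2/2 - \<epsilon>" using q by simp
  then show thesis using q False s by (intro that[of q]) (simp_all add: worst_sym_nonpos)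
qed

lemma three_point_value_midpoint_convex:
  assumes "0 < q" "q \<le> 1"
  shows "three_point_value q ((k1 + k2)/2) ((s1 + s2)/2)
           \<le> (three_point_value q k1 s1 + three_point_value q k2 s2)/2"
proof -
  have plus: "(k1 + k2)/2 + (s1 + s2)/2/q = ((k1 + s1/q) + (k2 + s2/q))/2"
    and minus: "(k1 + k2)/2 - (s1 + s2)/2/q = ((k1 - s1/q) + (k2 - s2/q))/2"
    using assms by (simp_all add: field_simps)
  have "1 - q^2 \<ge> 0" using assms by (simp add: power_le_one)
  then have "three_point_value q ((k1 + k2)/2) ((s1 + s2)/2)
      \<le> (1 - q^2) * ((sq_pos_part k1 + sq_pos_part k2)/2)
        + q^2/2 * ((sq_pos_part (k1 + s1/q) + sq_pos_part (k2 + s2/q))/2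
                   + (sq_pos_part (k1 - s1/q) + sq_pos_part (k2 - s2/q))/2)"
    unfolding three_point_value_def plus minus
    by (intro add_mono mult_left_mono sq_pos_part_midpoint_convex) auto
  also have "\<dots> = (three_point_value q k1 s1 + three_point_value q k2 s2)/2"
    unfolding three_point_value_def by (simp add: field_simps)
  finally show ?thesis .
qed

text \<open>A supremum of jointly midpoint-convex functions of \<open>(k, s)\<close>.\<close>

lemma worst_sym_midpoint_convex:
  assumes "s1 > 0" "s2 > 0"
  shows "worst_sym ((k1 + k2)/2) ((s1 + s2)/2) \<le> (worst_sym k1 s1 + worst_sym k2 s2)/2"
proof (rule ccontr)
  let ?W = "worst_sym ((k1 + k2)/2) ((s1 + s2)/2)" and ?R = "(worst_sym k1 s1 + worst_sym k2 s2)/2"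
  assume "\<not> ?W \<le> ?R"
  then have "?W - ?R > 0" by simp
  moreover have "(s1 + s2)/2 > 0" using assms by simp
  ultimately obtain q where q: "0 < q" "q \<le> 1"
    and "three_point_value q ((k1 + k2)/2) ((s1 + s2)/2) > ?W - (?W - ?R)"
    using three_point_value_approx by blast
  moreover have "three_point_value q ((k1 + k2)/2) ((s1 + s2)/2) \<le> ?R"
    using three_point_value_midpoint_convex[OF q, of k1 k2 s1 s2]
      three_point_value_le_worst_sym[OF q assms(1), of k1]
      three_point_value_le_worst_sym[OF q assms(2), of k2]
    by simp
  ultimately show False by simp
qed

lemma worst_sym_strict_mono:
  assumes "0 < s1" "s1 < s2"
  shows "worst_sym k s1 < worst_sym k s2"
proof -
  consider "k \<le> 0" | "0 < k" "k \<le> s1" | "s1 < k" "k \<le> s2" | "s2 < k" by linarith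
  then show ?thesis
  proof cases
    case 1
    have "s1^2 < s2^2" using assms by (simp add: power_strict_mono)
    then show ?thesis using 1 assms by (simp add: worst_sym_nonpos)
  next
    case 2
    have "(s1 + k)^2 < (s2 + k)^2" using 2 assms by (simp add: power_strict_mono)
    then show ?thesis using 2 assms by (simp add: worst_sym_pos_le)
  next
    case 3
    have "s1^2 < k^2" using assms 3 by (simp add: power_strict_mono)
    moreover have "(2 * k)^2 \<le> (s2 + k)^2" using 3 assms by (intro power_mono) auto
    ultimately show ?thesis
      using 3 assms by (simp add: worst_sym_pos_le worst_sym_pos_ge power2_eq_square)
  next
    case 4
    have "s1^2 < s2^2" using assms by (simp add: power_strict_mono)
    then show ?thesis using 4 assms by (simp add: worst_sym_pos_ge)
  qed
qed

lemma continuous_on_worst_sym [continuous_intros]: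
  "continuous_on A f \<Longrightarrow> continuous_on A g \<Longrightarrow> continuous_on A (\<lambda>x. worst_sym (f x) (g x))"
  unfolding worst_sym_def by (intro continuous_intros) auto

section \<open>Upper bounds from symmetry\<close>

lemma integral_eq_if_distr_eq:
  assumes "distr M N f = distr M N g" "f \<in> measurable M N" "g \<in> measurable M N"
    and "h \<in> borel_measurable N"
  shows "(\<integral>x. h (f x) \<partial>M) = (\<integral>x. (h (g x) :: real) \<partial>M)"
  using integral_distr[OF assms(2,4)] integral_distr[OF assms(3,4)] assms(1) by metis

lemma integral_sq_pos_part_le_worst_sym:
  fixes Y :: "'a \<Rightarrow> real"
  assumes "prob_space M" and Y: "Y \<in> borel_measurable M"
    and sym: "distr M borel Y = distr M borel (\<lambda>x. - Y x)"
    and Y2: "integrable M (\<lambda>x. (Y x)^2)" "(\<integral>x. (Y x)^2 \<partial>M) = s^2" and s: "s > 0"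
  shows "(\<integral>x. sq_pos_part (k + Y x) \<partial>M) \<le> worst_sym k s"
proof -
  interpret prob_space M by fact
  have bound: "integrable M (\<lambda>x. 2 * k^2 + 2 * (Y x)^2)" using Y2 by simp
  have int_plus: "integrable M (\<lambda>x. sq_pos_part (k + Y x))"
    by (rule Bochner_Integration.integrable_bound[OF bound])
      (use Y sq_pos_part_le[of "Y _" k] in \<open>auto simp: sq_pos_part_nonneg add.commute\<close>)
  have int_minus: "integrable M (\<lambda>x. sq_pos_part (k - Y x))"
    by (rule Bochner_Integration.integrable_bound[OF bound])
      (use Y sq_pos_part_le[of "- Y _" k] in \<open>auto simp: sq_pos_part_nonneg add.commute\<close>)
  have "(\<integral>x. sq_pos_part (k + Y x) \<partial>M) = (\<integral>x. sq_pos_part (k + - Y x) \<partial>M)"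
    using Y by (intro integral_eq_if_distr_eq[OF sym]) auto
  then have "(\<integral>x. sq_pos_part (k + Y x) \<partial>M)
               = (\<integral>x. (sq_pos_part (k + Y x) + sq_pos_part (k - Y x)) / 2 \<partial>M)"
    using int_plus int_minus by simp
  also have "\<dots> \<le> (\<integral>x. worst_sym k s + majorant_slope k s * ((Y x)^2 - s^2) \<partial>M)"
    using int_plus int_minus Y2 sq_pos_part_sym_le_majorant[OF s] by (intro integral_mono) auto
  also have "\<dots> = worst_sym k s" using Y2 by (simp add: algebra_simps prob_space)
  finally show ?thesis .
qed

lemma MS_D:
  assumes "G \<in> MS mu S"
  shows "prob_space G" "sets G = sets borel" "space G = UNIV"
    "integrable G (\<lambda>x. x $ i)" "(\<integral>x. x $ i \<partial>G) = mu $ i"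
    "integrable G (\<lambda>x. x $ i * x $ j)" "(\<integral>x. x $ i * x $ j \<partial>G) = S $ i $ j + mu $ i * mu $ j"
  using assms unfolding MS_def by (auto dest: sets_eq_imp_space_eq simp: algebra_simps)

lemma LS_D:
  assumes "F \<in> LS a s"
  shows "prob_space F" "sets F = sets borel" "space F = UNIV"
    "integrable F (\<lambda>x. x)" "(\<integral>x. x \<partial>F) = a"
    "integrable F (\<lambda>x. x^2)" "(\<integral>x. x^2 \<partial>F) = a^2 + s^2"
  using assms unfolding LS_def by (auto dest: sets_eq_imp_space_eq)

lemma uminus_image_iff: "(z::'a::group_add) \<in> uminus ` B \<longleftrightarrow> - z \<in> B"
  by (metis image_iff minus_minus)

text \<open>The centre of symmetry of a law in \<open>MS mu S\<close> is necessarily its mean \<open>mu\<close>.\<close>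

lemma MS_reflection:
  fixes mu :: "real^'n"
  assumes G: "G \<in> MS mu S"
  shows "distr G borel (\<lambda>x. x - mu) = distr G borel (\<lambda>x. mu - x)"
proof -
  interpret prob_space G using MS_D(1)[OF G] .
  obtain a where a: "\<forall>B\<in>sets borel. measure G {x. x - a \<in> B} = measure G {x. x - a \<in> uminus ` B}"
    using G unfolding MS_def by auto
  have borel: "measurable G borel = measurable borel borel"
    using MS_D(2)[OF G] by (rule measurable_cong_sets) simp
  have meas: "(\<lambda>x. x - c) \<in> measurable G borel" "(\<lambda>x. c - x) \<in> measurable G borel" for c :: "real^'n"
    unfolding borel by measurable
  have reflect: "distr G borel (\<lambda>x. x - a) = distr G borel (\<lambda>x. a - x)"
  proof (rule measure_eqI)
    fix B :: "(real^'n) set" assume "B \<in> sets (distr G borel (\<lambda>x. x - a))"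
    then have B: "B \<in> sets borel" by simp
    have "emeasure (distr G borel (\<lambda>x. x - a)) B = measure G {x. x - a \<in> B}"
      using emeasure_distr[OF meas(1) B] MS_D(3)[OF G] by (simp add: vimage_def emeasure_eq_measure)
    also have "\<dots> = measure G {x. a - x \<in> B}" using a B by (simp add: uminus_image_iff)
    also have "\<dots> = emeasure (distr G borel (\<lambda>x. a - x)) B"
      using emeasure_distr[OF meas(2) B] MS_D(3)[OF G] by (simp add: vimage_def emeasure_eq_measure)
    finally show "emeasure (distr G borel (\<lambda>x. x - a)) B = emeasure (distr G borel (\<lambda>x. a - x)) B" .
  qed simp
  have "a $ i = mu $ i" for i
  proof -
    have "(\<integral>x. (x - a) $ i \<partial>G) = (\<integral>x. (a - x) $ i \<partial>G)"
      by (rule integral_eq_if_distr_eq[OF reflect meas]) simp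
    then show ?thesis using MS_D(4,5)[OF G] by (simp add: prob_space)
  qed
  then have "a = mu" by (simp add: vec_eq_iff)
  with reflect show ?thesis by simp
qed

lemma LS_reflection:
  assumes F: "F \<in> LS a s"
  shows "distr F borel (\<lambda>x. x - a) = distr F borel (\<lambda>x. a - x)"
proof -
  interpret prob_space F using LS_D(1)[OF F] .
  obtain b where b: "\<forall>x. measure F {y. y - b > x} = measure F {y. y - b < - x}"
    using F unfolding LS_def by auto
  have borel: "measurable F borel = measurable borel borel"
    using LS_D(2)[OF F] by (rule measurable_cong_sets) simp
  have meas: "(\<lambda>x. x - c) \<in> measurable F borel" "(\<lambda>x. c - x) \<in> measurable F borel" for c :: real
    unfolding borel by measurable
  have events: "{y. x < y - b} \<in> events" "{y. y - b < x} \<in> events" for x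
    using LS_D(2)[OF F] by (simp_all add: sets_eq_imp_space_eq)
  have cdf_eq: "measure F {y. y - b \<le> x} = measure F {y. b - y \<le> x}" for x
  proof -
    have "{y. y - b \<le> x} = space F - {y. x < y - b}" "{y. b - y \<le> x} = space F - {y. y - b < - x}"
      using LS_D(3)[OF F] by auto
    then show ?thesis using b prob_compl[OF events(1)] prob_compl[OF events(2)] by simp
  qed
  have reflect: "distr F borel (\<lambda>x. x - b) = distr F borel (\<lambda>x. b - x)"
  proof (rule cdf_unique)
    show "real_distribution (distr F borel (\<lambda>x. x - b))" "real_distribution (distr F borel (\<lambda>x. b - x))"
      unfolding real_distribution_def real_distribution_axioms_def
      using prob_space_distr[OF meas(1)] prob_space_distr[OF meas(2)] by simp_all
    show "cdf (distr F borel (\<lambda>x. x - b)) = cdf (distr F borel (\<lambda>x. b - x))"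
      using cdf_eq measure_distr[OF meas(1)] measure_distr[OF meas(2)] LS_D(3)[OF F]
      by (simp add: cdf_def vimage_def)
  qed
  have "(\<integral>x. x - b \<partial>F) = (\<integral>x. b - x \<partial>F)"
    by (rule integral_eq_if_distr_eq[OF reflect meas, where h="\<lambda>x. x"]) simp
  then have "b = a" using LS_D(4,5)[OF F] by (simp add: prob_space)
  then show ?thesis using reflect by simp
qed

lemma MS_variance:
  fixes mu :: "real^'n"
  assumes G: "G \<in> MS mu S"
  shows "integrable G (\<lambda>x. (w \<bullet> (x - mu))^2)" "(\<integral>x. (w \<bullet> (x - mu))^2 \<partial>G) = w \<bullet> (S *v w)"
proof -
  interpret prob_space G using MS_D(1)[OF G] .
  define P where "P i j x = x$i * x$j - mu$i * x$j - mu$j * x$i + mu$i * mu$j" for i j and x :: "real^'n"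
  have int: "integrable G (P i j)" for i j unfolding P_def using MS_D(4,6)[OF G] by auto
  have cov: "(\<integral>x. P i j x \<partial>G) = S$i$j" for i j
    unfolding P_def using MS_D(4-7)[OF G] by (simp add: prob_space)
  have expand: "(w \<bullet> (x - mu))^2 = (\<Sum>i\<in>UNIV. \<Sum>j\<in>UNIV. w$i * w$j * P i j x)" for x
  proof -
    have "(w \<bullet> (x - mu))^2 = (\<Sum>i\<in>UNIV. w$i * (x$i - mu$i)) * (\<Sum>j\<in>UNIV. w$j * (x$j - mu$j))"
      by (simp add: inner_vec_def power2_eq_square)
    then show ?thesis by (simp add: sum_product P_def algebra_simps)
  qed
  show "integrable G (\<lambda>x. (w \<bullet> (x - mu))^2)" unfolding expand using int by auto
  have "(\<integral>x. (w \<bullet> (x - mu))^2 \<partial>G) = (\<Sum>i\<in>UNIV. \<Sum>j\<in>UNIV. w$i * w$j * (\<integral>x. P i j x \<partial>G))"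
    unfolding expand using int by (simp add: integral_sum integrable_sum)
  also have "\<dots> = w \<bullet> (S *v w)"
    by (simp add: cov inner_vec_def matrix_vector_mult_def sum_distrib_left mult_ac)
  finally show "(\<integral>x. (w \<bullet> (x - mu))^2 \<partial>G) = w \<bullet> (S *v w)" .
qed

lemma MS_integral_le_worst_sym:
  fixes mu :: "real^'n"
  assumes G: "G \<in> MS mu S" and w: "w \<bullet> (S *v w) > 0"
  shows "(\<integral>x. (max (w \<bullet> x - t) 0)^2 \<partial>G) \<le> worst_sym (w \<bullet> mu - t) (sqrt (w \<bullet> (S *v w)))"
proof -
  have borel: "measurable G borel = measurable borel borel"
    using MS_D(2)[OF G] by (rule measurable_cong_sets) simp
  have "distr G borel (\<lambda>x. w \<bullet> (x - mu)) = distr (distr G borel (\<lambda>x. x - mu)) borel ((\<bullet>) w)"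
    by (subst distr_distr) (simp_all add: borel comp_def)
  also have "\<dots> = distr G borel (\<lambda>x. - (w \<bullet> (x - mu)))"
    unfolding MS_reflection[OF G] by (subst distr_distr) (simp_all add: borel comp_def inner_diff_right)
  finally have "(\<integral>x. sq_pos_part ((w \<bullet> mu - t) + w \<bullet> (x - mu)) \<partial>G)
                  \<le> worst_sym (w \<bullet> mu - t) (sqrt (w \<bullet> (S *v w)))"
    using w MS_variance[OF G] by (intro integral_sq_pos_part_le_worst_sym MS_D(1)[OF G]) (simp_all add: borel)
  then show ?thesis unfolding sq_pos_part_def by (simp add: inner_diff_right)
qed

lemma LS_integral_le_worst_sym:
  assumes F: "F \<in> LS a s" and s: "s > 0"
  shows "(\<integral>x. (max (x - t) 0)^2 \<partial>F) \<le> worst_sym (a - t) s"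
proof -
  interpret prob_space F using LS_D(1)[OF F] .
  have borel: "measurable F borel = measurable borel borel"
    using LS_D(2)[OF F] by (rule measurable_cong_sets) simp
  have square: "(x - a)^2 = x^2 - 2 * a * x + a^2" for x by (simp add: power2_eq_square algebra_simps)
  have "integrable F (\<lambda>x. (x - a)^2)" unfolding square using LS_D(4,6)[OF F] by simp
  moreover have "(\<integral>x. (x - a)^2 \<partial>F) = s^2" unfolding square using LS_D(4-7)[OF F]
    by (simp add: prob_space power2_eq_square)
  moreover have "distr F borel (\<lambda>x. x - a) = distr F borel (\<lambda>x. - (x - a))"
    using LS_reflection[OF F] by simp
  ultimately have "(\<integral>x. sq_pos_part ((a - t) + (x - a)) \<partial>F) \<le> worst_sym (a - t) s"
    using s LS_D(1)[OF F] by (intro integral_sq_pos_part_le_worst_sym) (simp_all add: borel)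
  then show ?thesis unfolding sq_pos_part_def by simp
qed

section \<open>Lower bounds from finitely supported symmetric laws\<close>

lemma expectation_pair_pmf_finite:
  fixes h :: "'a \<times> 'b \<Rightarrow> real"
  assumes "finite (set_pmf p)" "finite (set_pmf q)"
  shows "measure_pmf.expectation (pair_pmf p q) h
           = measure_pmf.expectation p (\<lambda>a. measure_pmf.expectation q (\<lambda>b. h (a, b)))"
proof -
  have "measure_pmf.expectation (pair_pmf p q) h
          = (\<Sum>x\<in>set_pmf p \<times> set_pmf q. h x * pmf (pair_pmf p q) x)"
    using assms by (intro integral_measure_pmf_real) auto
  also have "\<dots> = (\<Sum>a\<in>set_pmf p. \<Sum>b\<in>set_pmf q. h (a, b) * (pmf p a * pmf q b))"
    by (subst sum.cartesian_product) (auto intro!: sum.cong simp: pmf_pair)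
  also have "\<dots> = (\<Sum>a\<in>set_pmf p. (\<Sum>b\<in>set_pmf q. h (a, b) * pmf q b) * pmf p a)"
    by (simp add: sum_distrib_right sum_distrib_left mult_ac)
  also have "\<dots> = measure_pmf.expectation p (\<lambda>a. measure_pmf.expectation q (\<lambda>b. h (a, b)))"
    using assms by (subst integral_measure_pmf_real[of "set_pmf p"]; simp)
      (intro sum.cong refl arg_cong2[where f="(*)"],
       subst integral_measure_pmf_real[of "set_pmf q"], auto)
  finally show ?thesis .
qed

lemma expectation_odd_symmetric_pmf:
  fixes V :: "'a::group_add pmf" and g :: "'a \<Rightarrow> real"
  assumes "map_pmf uminus V = V" "\<And>v. g (- v) = - g v"
  shows "measure_pmf.expectation V g = 0"
proof -
  have "measure_pmf.expectation V g = measure_pmf.expectation (map_pmf uminus V) g"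
    using assms(1) by simp
  also have "\<dots> = - measure_pmf.expectation V g" by (simp add: assms(2))
  finally show ?thesis by simp
qed

lemma measure_pmf_uminus_image:
  fixes V :: "'a::group_add pmf"
  assumes "map_pmf uminus V = V"
  shows "measure_pmf.prob V (uminus ` B) = measure_pmf.prob V B"
proof -
  have "measure_pmf.prob V (uminus ` B) = measure_pmf.prob (map_pmf uminus V) (uminus ` B)"
    using assms by simp
  also have "\<dots> = measure_pmf.prob V B" by (simp add: vimage_def uminus_image_iff)
  finally show ?thesis .
qed

lemma distr_measure_pmf_finite:
  fixes p :: "'a pmf" and f :: "'a \<Rightarrow> 'b::topological_space"
  assumes fin: "finite (set_pmf p)"
  defines "F \<equiv> distr (measure_pmf p) borel f"
  shows "prob_space F" and "sets F = sets borel"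
    and "\<And>g::'b \<Rightarrow> real. g \<in> borel_measurable borel \<Longrightarrow> integrable F g"
    and "\<And>g::'b \<Rightarrow> real. g \<in> borel_measurable borel \<Longrightarrow>
           (\<integral>x. g x \<partial>F) = measure_pmf.expectation p (\<lambda>x. g (f x))"
    and "\<And>A. A \<in> sets borel \<Longrightarrow> measure F A = measure_pmf.prob p (f -` A)"
proof -
  have f: "f \<in> measurable (measure_pmf p) borel" by simp
  show "prob_space F" unfolding F_def by (rule measure_pmf.prob_space_distr[OF f])
  show "sets F = sets borel" unfolding F_def by simp
  show "integrable F g" if "g \<in> borel_measurable borel" for g :: "'b \<Rightarrow> real"
    unfolding F_def using integrable_distr_eq[OF f that] integrable_measure_pmf_finite[OF fin]
    by simp
  show "(\<integral>x. g x \<partial>F) = measure_pmf.expectation p (\<lambda>x. g (f x))"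
    if "g \<in> borel_measurable borel" for g :: "'b \<Rightarrow> real"
    unfolding F_def by (rule integral_distr[OF f that])
  show "measure F A = measure_pmf.prob p (f -` A)" if "A \<in> sets borel" for A
    unfolding F_def using measure_distr[OF f that] by simp
qed

lemma LS_of_symmetric_pmf:
  assumes fin: "finite (set_pmf V)" and sym: "map_pmf uminus V = V"
    and var: "measure_pmf.expectation V (\<lambda>v. v^2) = s^2"
  shows "distr (measure_pmf V) borel (\<lambda>v. a + v) \<in> LS a s"
proof -
  define F where "F = distr (measure_pmf V) borel (\<lambda>v. a + v)"
  note F = distr_measure_pmf_finite[OF fin, where f="\<lambda>v. a + v", folded F_def]
  have int: "integrable (measure_pmf V) g" for g :: "real \<Rightarrow> real"
    using integrable_measure_pmf_finite[OF fin] .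
  have mean: "measure_pmf.expectation V (\<lambda>v. v) = 0"
    by (rule expectation_odd_symmetric_pmf[OF sym]) simp
  have "(\<integral>x. x \<partial>F) = measure_pmf.expectation V (\<lambda>v. a + v)"
    by (rule F(4)) simp
  also have "\<dots> = a"
    using mean int[of "\<lambda>v. v"] by simp
  finally have mean_F: "(\<integral>x. x \<partial>F) = a" .
  have "(\<integral>x. x^2 \<partial>F) = measure_pmf.expectation V (\<lambda>v. (a + v)^2)"
    by (rule F(4)) simp
  also have "\<dots> = measure_pmf.expectation V (\<lambda>v. a^2 + 2 * a * v + v^2)"
    by (simp add: power2_eq_square algebra_simps)
  also have "\<dots> = a^2 + s^2"
    using mean var int[of "\<lambda>v. v"] int[of "\<lambda>v. v^2"] int[of "\<lambda>v. 2 * a * v"] by simp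
  finally have var_F: "(\<integral>x. x^2 \<partial>F) = a^2 + s^2" .
  have tails: "measure F {y. x < y - a} = measure F {y. y - a < - x}" for x
  proof -
    have reflected: "uminus ` {v. x < v} = {v. v < - x}"
      by (auto simp: uminus_image_iff less_minus_iff[of x])
    have "measure F {y. x < y - a} = measure_pmf.prob V {v. x < v}"
      using F(5)[of "{y. x < y - a}"] by (simp add: vimage_def)
    also have "\<dots> = measure_pmf.prob V {v. v < - x}"
      using measure_pmf_uminus_image[OF sym, of "{v. x < v}"] unfolding reflected ..
    also have "\<dots> = measure F {y. y - a < - x}"
      using F(5)[of "{y. y - a < - x}"] by (simp add: vimage_def)
    finally show ?thesis .
  qed
  have "integrable F (\<lambda>x. x)" "integrable F (\<lambda>x. x^2)" by (rule F(3); simp)+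
  with F(1,2) mean_F var_F tails show ?thesis
    unfolding LS_def F_def[symmetric] by blast
qed

lemma MS_of_symmetric_pmf:
  fixes V :: "(real^'n) pmf"
  assumes fin: "finite (set_pmf V)" and sym: "map_pmf uminus V = V"
    and cov: "\<And>i j. measure_pmf.expectation V (\<lambda>v. v $ i * v $ j) = S $ i $ j"
  shows "distr (measure_pmf V) borel (\<lambda>v. mu + v) \<in> MS mu S"
proof -
  define G where "G = distr (measure_pmf V) borel (\<lambda>v. mu + v)"
  note G = distr_measure_pmf_finite[OF fin, where f="\<lambda>v. mu + v", folded G_def]
  have int: "integrable (measure_pmf V) g" for g :: "real^'n \<Rightarrow> real"
    using integrable_measure_pmf_finite[OF fin] .
  have mean: "measure_pmf.expectation V (\<lambda>v. v $ i) = 0" for i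
    by (rule expectation_odd_symmetric_pmf[OF sym]) simp
  have mean_G: "(\<integral>x. x $ i \<partial>G) = mu $ i" for i
  proof -
    have "(\<integral>x. x $ i \<partial>G) = measure_pmf.expectation V (\<lambda>v. (mu + v) $ i)"
      by (rule G(4)) simp
    also have "\<dots> = mu $ i" using mean int[of "\<lambda>v. v $ i"] by simp
    finally show ?thesis .
  qed
  have cov_G: "(\<integral>x. x $ i * x $ j \<partial>G) - mu $ i * mu $ j = S $ i $ j" for i j
  proof -
    have "(\<integral>x. x $ i * x $ j \<partial>G)
            = measure_pmf.expectation V (\<lambda>v. (mu + v) $ i * (mu + v) $ j)"
      by (rule G(4)) simp
    also have "\<dots> = measure_pmf.expectation V
                       (\<lambda>v. mu $ i * mu $ j + mu $ i * v $ j + mu $ j * v $ i + v $ i * v $ j)"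
      by (simp add: algebra_simps)
    also have "\<dots> = mu $ i * mu $ j + S $ i $ j"
      using mean cov int[of "\<lambda>v. v $ i"] int[of "\<lambda>v. v $ j"] int[of "\<lambda>v. v $ i * v $ j"]
        int[of "\<lambda>v. mu $ i * v $ j"] int[of "\<lambda>v. mu $ j * v $ i"]
        int[of "\<lambda>v. mu $ i * v $ j + mu $ j * v $ i"]
      by simp
    finally show ?thesis by simp
  qed
  have sym_G: "measure G {x. x - mu \<in> B} = measure G {x. x - mu \<in> uminus ` B}"
    if B: "B \<in> sets borel" for B
  proof -
    have "{x. x - mu \<in> B} \<in> sets borel" "{x. x - mu \<in> uminus ` B} \<in> sets borel"
      using B measurable_sets[of "\<lambda>x. x - mu" borel borel B]
        measurable_sets[of "\<lambda>x. - (x - mu)" borel borel B]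
      by (simp_all add: vimage_def uminus_image_iff)
    then show ?thesis using G(5) measure_pmf_uminus_image[OF sym] by (simp add: vimage_def)
  qed
  have "integrable G (\<lambda>x. x $ i)" "integrable G (\<lambda>x. x $ i * x $ j)" for i j
    by (rule G(3); simp)+
  with G(1,2) mean_G cov_G sym_G show ?thesis
    unfolding MS_def G_def[symmetric] by blast
qed

definition rademacher_pmf :: "real pmf" where
  "rademacher_pmf = pmf_of_set {-1, 1}"

lemma finite_set_pmf_rademacher: "finite (set_pmf rademacher_pmf)"
  unfolding rademacher_pmf_def by simp

lemma expectation_pair_rademacher:
  fixes h :: "'a \<times> real \<Rightarrow> real"
  assumes "finite (set_pmf A)"
  shows "measure_pmf.expectation (pair_pmf A rademacher_pmf) h
           = measure_pmf.expectation A (\<lambda>a. (h (a, 1) + h (a, -1)) / 2)"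
  using assms by (simp add: expectation_pair_pmf_finite finite_set_pmf_rademacher
      rademacher_pmf_def integral_pmf_of_set add.commute)

lemma map_pmf_uminus_signed:
  assumes "\<And>a e. f (a, - e) = - f (a, e)"
  shows "map_pmf uminus (map_pmf f (pair_pmf A rademacher_pmf)) = map_pmf f (pair_pmf A rademacher_pmf)"
proof -
  have "map_pmf uminus rademacher_pmf = rademacher_pmf"
    unfolding rademacher_pmf_def by (subst map_pmf_of_set_inj) (auto simp: insert_commute)
  then have flip: "map_pmf (\<lambda>(a, e). (a, - e)) (pair_pmf A rademacher_pmf) = pair_pmf A rademacher_pmf"
    using map_pair[of id uminus A rademacher_pmf] by (simp add: id_def)
  have "map_pmf uminus (map_pmf f (pair_pmf A rademacher_pmf))
          = map_pmf f (map_pmf (\<lambda>(a, e). (a, - e)) (pair_pmf A rademacher_pmf))"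
    unfolding pmf.map_comp by (intro map_pmf_cong) (auto simp: assms split: prod.split)
  then show ?thesis unfolding flip .
qed

definition three_point_pmf :: "real \<Rightarrow> real \<Rightarrow> real pmf" where
  "three_point_pmf q r =
     map_pmf (\<lambda>(b, e). if b then e * r else 0) (pair_pmf (bernoulli_pmf (q^2)) rademacher_pmf)"

lemma finite_set_pmf_bernoulli: "finite (set_pmf (bernoulli_pmf p))"
  by (rule finite_subset[of _ UNIV]) auto

lemma finite_set_pmf_three_point: "finite (set_pmf (three_point_pmf q r))"
  unfolding three_point_pmf_def by (simp add: finite_set_pmf_rademacher finite_set_pmf_bernoulli)

lemma map_pmf_uminus_three_point: "map_pmf uminus (three_point_pmf q r) = three_point_pmf q r"
  unfolding three_point_pmf_def by (rule map_pmf_uminus_signed) auto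

lemma expectation_three_point_pmf:
  assumes "0 < q" "q \<le> 1"
  shows "measure_pmf.expectation (three_point_pmf q r) h = (1 - q^2) * h 0 + q^2/2 * (h r + h (-r))"
  using assms unfolding three_point_pmf_def
  by (simp add: expectation_pair_rademacher finite_set_pmf_bernoulli power_le_one field_simps)

lemma expectation_three_point_pmf_sq_pos_part:
  assumes "0 < q" "q \<le> 1"
  shows "measure_pmf.expectation (three_point_pmf q (s/q)) (\<lambda>y. sq_pos_part (k + y))
           = three_point_value q k s"
  using assms by (simp add: expectation_three_point_pmf three_point_value_def)

lemma expectation_three_point_pmf_sq:
  assumes "0 < q" "q \<le> 1"
  shows "measure_pmf.expectation (three_point_pmf q (s/q)) (\<lambda>y. y^2) = s^2"
  using assms by (simp add: expectation_three_point_pmf power_divide)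

definition spread_pmf :: "nat \<Rightarrow> (nat \<Rightarrow> real^'n) \<Rightarrow> (real^'n) pmf" where
  "spread_pmf m c =
     map_pmf (\<lambda>(l, e). (e * sqrt m) *\<^sub>R c l) (pair_pmf (pmf_of_set {..<m}) rademacher_pmf)"

lemma finite_set_pmf_spread: "m > 0 \<Longrightarrow> finite (set_pmf (spread_pmf m c))"
  unfolding spread_pmf_def by (simp add: finite_set_pmf_rademacher lessThan_empty_iff)

lemma map_pmf_uminus_spread: "map_pmf uminus (spread_pmf m c) = spread_pmf m c"
  unfolding spread_pmf_def by (rule map_pmf_uminus_signed) auto

lemma expectation_spread_pmf:
  fixes h :: "real^'n \<Rightarrow> real"
  assumes "m > 0"
  shows "measure_pmf.expectation (spread_pmf m c) h
           = (\<Sum>l<m. (h (sqrt m *\<^sub>R c l) + h (- (sqrt m *\<^sub>R c l))) / 2) / m"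
  using assms unfolding spread_pmf_def
  by (simp add: expectation_pair_rademacher integral_pmf_of_set lessThan_empty_iff
      sum_divide_distrib[symmetric] mult.commute)

lemma expectation_spread_pmf_product:
  assumes "m > 0"
  shows "measure_pmf.expectation (spread_pmf m c) (\<lambda>z. (A + z $ i) * (B + z $ j))
           = A * B + outer_sum m c $ i $ j"
proof -
  have "((A + (sqrt m *\<^sub>R c l) $ i) * (B + (sqrt m *\<^sub>R c l) $ j)
          + (A + (- (sqrt m *\<^sub>R c l)) $ i) * (B + (- (sqrt m *\<^sub>R c l)) $ j)) / 2
        = A * B + m * (c l $ i * c l $ j)" for l
    by (simp add: algebra_simps)
  then have "measure_pmf.expectation (spread_pmf m c) (\<lambda>z. (A + z $ i) * (B + z $ j))
               = (\<Sum>l<m. A * B + m * (c l $ i * c l $ j)) / m"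
    using assms by (simp only: expectation_spread_pmf)
  also have "\<dots> = A * B + outer_sum m c $ i $ j"
    using assms by (simp add: sum.distrib outer_sum_def add_divide_distrib flip: sum_distrib_left)
  finally show ?thesis .
qed

lemma expectation_spread_pmf_orthogonal:
  fixes f :: "real \<Rightarrow> real"
  assumes "m > 0" "\<forall>l<m. c l \<bullet> w = 0"
  shows "measure_pmf.expectation (spread_pmf m c) (\<lambda>z. f (w \<bullet> z)) = f 0"
proof -
  have "\<forall>l<m. w \<bullet> c l = 0" using assms(2) by (metis inner_commute)
  then show ?thesis using assms(1) by (simp add: expectation_spread_pmf)
qed

lemma LS_three_point:
  assumes s: "s > 0" and q: "0 < q" "q \<le> 1"
  shows "\<exists>F\<in>LS a s. (\<integral>x. (max (x - t) 0)^2 \<partial>F) = three_point_value q (a - t) s"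
proof (intro bexI)
  let ?V = "three_point_pmf q (s/q)"
  show "distr (measure_pmf ?V) borel (\<lambda>v. a + v) \<in> LS a s"
    using expectation_three_point_pmf_sq[OF q, of s] finite_set_pmf_three_point
      map_pmf_uminus_three_point by (intro LS_of_symmetric_pmf) simp_all
  show "(\<integral>x. (max (x - t) 0)^2 \<partial>distr (measure_pmf ?V) borel (\<lambda>v. a + v)) = three_point_value q (a - t) s"
    using distr_measure_pmf_finite(4)[OF finite_set_pmf_three_point, of "\<lambda>x. (max (x - t) 0)^2"]
      expectation_three_point_pmf_sq_pos_part[OF q, of s "a - t"]
    by (simp add: sq_pos_part_def algebra_simps)
qed

lemma map_pmf_uminus_pair_sum:
  fixes Q :: "real pmf" and Z :: "(real^'n) pmf" and b :: "real^'n"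
  assumes "map_pmf uminus Q = Q" "map_pmf uminus Z = Z"
  defines "V \<equiv> map_pmf (\<lambda>(y, z). y *\<^sub>R b + z) (pair_pmf Q Z)"
  shows "map_pmf uminus V = V"
proof -
  have "map_pmf uminus V
          = map_pmf (\<lambda>(y, z). y *\<^sub>R b + z) (map_pmf (\<lambda>(y, z). (- y, - z)) (pair_pmf Q Z))"
    unfolding V_def pmf.map_comp by (intro map_pmf_cong) auto
  then show ?thesis unfolding map_pair assms(1,2) V_def .
qed

text \<open>The law is \<open>Y *\<^sub>R (S *v w) / (w \<bullet> (S *v w)) + Z\<close> with a three-point \<open>Y\<close> and independent
  noise \<open>Z\<close> orthogonal to \<open>w\<close> that carries the remaining covariance.\<close>

lemma symmetric_pmf_three_point_along:
  fixes w :: "real^'n"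
  assumes S: "pos_def_mat S" and w: "w \<bullet> (S *v w) > 0" and q: "0 < q" "q \<le> 1"
  obtains V :: "(real^'n) pmf" where "finite (set_pmf V)" "map_pmf uminus V = V"
    "\<And>i j. measure_pmf.expectation V (\<lambda>v. v $ i * v $ j) = S $ i $ j"
    "\<And>f :: real \<Rightarrow> real. measure_pmf.expectation V (\<lambda>v. f (w \<bullet> v))
       = measure_pmf.expectation (three_point_pmf q (sqrt (w \<bullet> (S *v w)) / q)) f"
proof -
  define \<sigma> where "\<sigma> = w \<bullet> (S *v w)"
  obtain m c where m: "m > 0" and orth: "\<forall>l<m. c l \<bullet> w = 0"
    and S_split: "S = (1 / \<sigma>) *\<^sub>R outer (S *v w) + outer_sum m c"
    using pos_def_split_along[OF S \<sigma>_def] w unfolding \<sigma>_def by blast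
  define b where "b = (1 / \<sigma>) *\<^sub>R (S *v w)"
  define Q where "Q = three_point_pmf q (sqrt \<sigma> / q)"
  define Z where "Z = spread_pmf m c"
  define V where "V = map_pmf (\<lambda>(y, z). y *\<^sub>R b + z) (pair_pmf Q Z)"
  have fin: "finite (set_pmf Q)" "finite (set_pmf Z)"
    unfolding Q_def Z_def using m by (simp_all add: finite_set_pmf_three_point finite_set_pmf_spread)
  have exp_V: "measure_pmf.expectation V h
                 = measure_pmf.expectation Q (\<lambda>y. measure_pmf.expectation Z (\<lambda>z. h (y *\<^sub>R b + z)))"
    for h :: "real^'n \<Rightarrow> real"
    unfolding V_def by (simp add: expectation_pair_pmf_finite[OF fin])
  show thesis
  proof
    show "finite (set_pmf V)" unfolding V_def using fin by simp
    show "map_pmf uminus V = V"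
      unfolding V_def Q_def Z_def
      by (intro map_pmf_uminus_pair_sum map_pmf_uminus_three_point map_pmf_uminus_spread)
    fix i j
    have "measure_pmf.expectation V (\<lambda>v. v $ i * v $ j)
            = measure_pmf.expectation Q (\<lambda>y. (y * b $ i) * (y * b $ j) + outer_sum m c $ i $ j)"
      unfolding exp_V Z_def by (simp add: expectation_spread_pmf_product[OF m])
    also have "\<dots> = \<sigma> * b $ i * b $ j + outer_sum m c $ i $ j"
      using q w unfolding Q_def \<sigma>_def
      by (simp add: expectation_three_point_pmf[OF q] power2_eq_square field_simps)
    also have "\<dots> = S $ i $ j"
      using w unfolding \<sigma>_def[symmetric] by (subst S_split) (simp add: b_def outer_def)
    finally show "measure_pmf.expectation V (\<lambda>v. v $ i * v $ j) = S $ i $ j" .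
  next
    fix f :: "real \<Rightarrow> real"
    have "w \<bullet> b = 1" unfolding b_def \<sigma>_def using w by simp
    then have "measure_pmf.expectation Z (\<lambda>z. f (w \<bullet> (y *\<^sub>R b + z))) = f y" for y
      unfolding Z_def using expectation_spread_pmf_orthogonal[OF m orth, of "\<lambda>u. f (y + u)"]
      by (simp add: inner_add_right)
    then show "measure_pmf.expectation V (\<lambda>v. f (w \<bullet> v))
                 = measure_pmf.expectation (three_point_pmf q (sqrt (w \<bullet> (S *v w)) / q)) f"
      unfolding exp_V Q_def \<sigma>_def by simp
  qed
qed

lemma MS_three_point:
  fixes mu w :: "real^'n"
  assumes S: "pos_def_mat S" and w: "w \<bullet> (S *v w) > 0" and q: "0 < q" "q \<le> 1"
  shows "\<exists>G\<in>MS mu S. (\<integral>x. (max (w \<bullet> x - t) 0)^2 \<partial>G)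
                        = three_point_value q (w \<bullet> mu - t) (sqrt (w \<bullet> (S *v w)))"
proof -
  obtain V where fin: "finite (set_pmf V)" and sym: "map_pmf uminus V = V"
    and cov: "\<And>i j. measure_pmf.expectation V (\<lambda>v. v $ i * v $ j) = S $ i $ j"
    and along: "\<And>f :: real \<Rightarrow> real. measure_pmf.expectation V (\<lambda>v. f (w \<bullet> v))
       = measure_pmf.expectation (three_point_pmf q (sqrt (w \<bullet> (S *v w)) / q)) f"
    using symmetric_pmf_three_point_along[OF S w q] by blast
  show ?thesis
  proof
    show "distr (measure_pmf V) borel (\<lambda>v. mu + v) \<in> MS mu S"
      using fin sym cov by (rule MS_of_symmetric_pmf)
    have "(\<integral>x. (max (w \<bullet> x - t) 0)^2 \<partial>distr (measure_pmf V) borel (\<lambda>v. mu + v))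
            = measure_pmf.expectation V (\<lambda>v. sq_pos_part (w \<bullet> mu - t + w \<bullet> v))"
      using distr_measure_pmf_finite(4)[OF fin, of "\<lambda>x. (max (w \<bullet> x - t) 0)^2"]
      by (simp add: sq_pos_part_def algebra_simps)
    also have "\<dots> = measure_pmf.expectation (three_point_pmf q (sqrt (w \<bullet> (S *v w)) / q))
                       (\<lambda>y. sq_pos_part (w \<bullet> mu - t + y))"
      by (rule along)
    also have "\<dots> = three_point_value q (w \<bullet> mu - t) (sqrt (w \<bullet> (S *v w)))"
      by (rule expectation_three_point_pmf_sq_pos_part[OF q])
    finally show "(\<integral>x. (max (w \<bullet> x - t) 0)^2 \<partial>distr (measure_pmf V) borel (\<lambda>v. mu + v))
                    = three_point_value q (w \<bullet> mu - t) (sqrt (w \<bullet> (S *v w)))" .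
  qed
qed

lemma Sup_eq_worst_sym:
  assumes s: "s > 0"
    and upper: "\<And>v. v \<in> V \<Longrightarrow> v \<le> worst_sym k s"
    and attained: "\<And>q. 0 < q \<Longrightarrow> q \<le> 1 \<Longrightarrow> three_point_value q k s \<in> V"
  shows "Sup V = worst_sym k s"
proof (rule cSup_eq_non_empty)
  show "V \<noteq> {}" using attained[of 1] by auto
  show "v \<le> worst_sym k s" if "v \<in> V" for v using upper that .
  fix y assume y: "\<And>v. v \<in> V \<Longrightarrow> v \<le> y"
  show "worst_sym k s \<le> y"
  proof (rule ccontr)
    assume "\<not> worst_sym k s \<le> y"
    then obtain q where q: "0 < q" "q \<le> 1"
      and "three_point_value q k s > worst_sym k s - (worst_sym k s - y)"
      using three_point_value_approx[OF s, of "worst_sym k s - y" k] by auto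
    then show False using y[OF attained[OF q]] by simp
  qed
qed

theorem hS_eq_worst_sym:
  assumes s: "s > 0"
  shows "hS t a s = worst_sym (a - t) s"
  unfolding hS_def
proof (rule Sup_eq_worst_sym[OF s])
  show "v \<le> worst_sym (a - t) s" if "v \<in> {\<integral>x. (max (x - t) 0)^2 \<partial>F | F. F \<in> LS a s}" for v
    using that LS_integral_le_worst_sym[OF _ s] by auto
  show "three_point_value q (a - t) s \<in> {\<integral>x. (max (x - t) 0)^2 \<partial>F | F. F \<in> LS a s}"
    if "0 < q" "q \<le> 1" for q
    using LS_three_point[OF s that, of a t] by force
qed

theorem worst_obj_eq_worst_sym:
  fixes mu w :: "real^'n"
  assumes S: "pos_def_mat S" and w: "w \<bullet> (S *v w) > 0"
  shows "worst_obj mu S t w = worst_sym (w \<bullet> mu - t) (sqrt (w \<bullet> (S *v w)))"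
  unfolding worst_obj_def
proof (rule Sup_eq_worst_sym)
  show "sqrt (w \<bullet> (S *v w)) > 0" using w by simp
  show "v \<le> worst_sym (w \<bullet> mu - t) (sqrt (w \<bullet> (S *v w)))"
    if "v \<in> {\<integral>x. (max (w \<bullet> x - t) 0)^2 \<partial>G | G. G \<in> MS mu S}" for v
    using that MS_integral_le_worst_sym[OF _ w] by auto
  show "three_point_value q (w \<bullet> mu - t) (sqrt (w \<bullet> (S *v w)))
          \<in> {\<integral>x. (max (w \<bullet> x - t) 0)^2 \<partial>G | G. G \<in> MS mu S}"
    if "0 < q" "q \<le> 1" for q
    using MS_three_point[OF S w that, of mu t] by force
qed

section \<open>The minimum-variance frontier\<close>

lemma vec_1_eq_1: "vec 1 = (1 :: real^'n)"
  by (simp add: vec_eq_iff)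

lemma pos_def_mat_inverse:
  assumes "pos_def_mat S"
  shows "S ** matrix_inv S = mat 1" "matrix_inv S ** S = mat 1"
proof -
  have "\<forall>x. S *v x = 0 \<longrightarrow> x = 0"
    using assms unfolding pos_def_mat_def by (metis inner_zero_right less_irrefl)
  then obtain B where "B ** S = mat 1" using matrix_left_invertible_ker by blast
  then have "\<exists>A'. S ** A' = mat 1 \<and> A' ** S = mat 1" using matrix_left_right_inverse by blast
  then have "S ** matrix_inv S = mat 1 \<and> matrix_inv S ** S = mat 1"
    unfolding matrix_inv_def by (rule someI_ex)
  then show "S ** matrix_inv S = mat 1" "matrix_inv S ** S = mat 1" by simp_all
qed

locale frontier =
  fixes mu :: "real^'n" and S :: "real^'n^'n"
  assumes pos_def: "pos_def_mat S"
    and not_parallel: "\<forall>c::real. mu \<noteq> c *\<^sub>R vec 1"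
begin

abbreviation Sinv :: "real^'n^'n" where "Sinv \<equiv> matrix_inv S"

lemma S_sym: "transpose S = S"
  using pos_def unfolding pos_def_mat_def by simp

lemma S_pos: "x \<noteq> 0 \<Longrightarrow> x \<bullet> (S *v x) > 0"
  using pos_def unfolding pos_def_mat_def by simp

lemma S_Sinv: "S *v (Sinv *v x) = x"
  using pos_def_mat_inverse(1)[OF pos_def] by (simp add: matrix_vector_mul_assoc)

lemma Sinv_sym: "transpose Sinv = Sinv"
proof -
  have "transpose Sinv ** S = mat 1"
    by (metis pos_def_mat_inverse(1)[OF pos_def] S_sym matrix_transpose_mul transpose_mat)
  then have "transpose Sinv = transpose Sinv ** (S ** Sinv)"
    using pos_def_mat_inverse(1)[OF pos_def] by simp
  also have "\<dots> = Sinv" by (simp add: matrix_mul_assoc \<open>transpose Sinv ** S = mat 1\<close>)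
  finally show ?thesis .
qed

lemma Sinv_pos: "x \<noteq> 0 \<Longrightarrow> x \<bullet> (Sinv *v x) > 0"
  using S_pos[of "Sinv *v x"] S_Sinv[of x] by (metis inner_commute matrix_vector_mult_0_right)

lemma inner_Sinv_commute: "x \<bullet> (Sinv *v y) = y \<bullet> (Sinv *v x)"
  using inner_matrix_vector_commute[OF Sinv_sym] .

definition inv_ee :: real where "inv_ee = 1 \<bullet> (Sinv *v 1)"
definition inv_em :: real where "inv_em = 1 \<bullet> (Sinv *v mu)"
definition inv_mm :: real where "inv_mm = mu \<bullet> (Sinv *v mu)"

lemma uq_eq: "uq mu S = inv_ee * inv_mm - inv_em^2"
  unfolding uq_def inv_ee_def inv_em_def inv_mm_def vec_1_eq_1 ..

lemma v_eq: "v0 mu S = inv_ee / uq mu S" "v1 mu S = inv_em / uq mu S" "v2 mu S = inv_mm / uq mu S"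
  unfolding v0_def v1_def v2_def inv_ee_def inv_em_def inv_mm_def vec_1_eq_1 by simp_all

lemma inv_ee_pos: "inv_ee > 0"
  unfolding inv_ee_def by (rule Sinv_pos) (simp add: vec_eq_iff)

text \<open>Strict Cauchy-Schwarz for the form of \<open>Sinv\<close>, as \<open>mu\<close> and \<open>1\<close> are independent.\<close>

lemma uq_pos: "uq mu S > 0"
proof -
  define l where "l = inv_em / inv_ee"
  have "mu - l *\<^sub>R 1 \<noteq> 0" using not_parallel vec_1_eq_1 by auto
  then have "(mu - l *\<^sub>R 1) \<bullet> (Sinv *v (mu - l *\<^sub>R 1)) > 0" by (rule Sinv_pos)
  then have "inv_mm - 2 * l * inv_em + l^2 * inv_ee > 0"
    using inner_Sinv_commute[of 1 mu]
    by (simp add: inv_ee_def inv_em_def inv_mm_def power2_eq_square algebra_simps)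
  then have "inv_mm - inv_em^2 / inv_ee > 0"
    using inv_ee_pos unfolding l_def by (simp add: power2_eq_square field_simps)
  then show ?thesis using inv_ee_pos by (simp add: uq_eq field_simps)
qed

lemma v0_pos: "v0 mu S > 0"
  using v_eq inv_ee_pos uq_pos by simp

lemma v_det_pos: "v0 mu S * v2 mu S - (v1 mu S)^2 > 0"
proof -
  have "v0 mu S * v2 mu S - (v1 mu S)^2 = uq mu S / (uq mu S)^2"
    by (simp add: v_eq uq_eq power2_eq_square diff_divide_distrib)
  then show ?thesis using uq_pos by simp
qed

definition frontier_var :: "real \<Rightarrow> real" where
  "frontier_var \<xi> = v0 mu S * \<xi>^2 - 2 * v1 mu S * \<xi> + v2 mu S"

lemma w_of_inner_1: "w_of mu S \<xi> \<bullet> 1 = 1"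
proof -
  have "w_of mu S \<xi> \<bullet> 1 = (v0 mu S * \<xi> - v1 mu S) * ((Sinv *v mu) \<bullet> 1)
                              + (- v1 mu S * \<xi> + v2 mu S) * ((Sinv *v 1) \<bullet> 1)"
    unfolding w_of_def vec_1_eq_1 by (simp add: inner_add_left)
  also have "\<dots> = (v0 mu S * \<xi> - v1 mu S) * inv_em + (- v1 mu S * \<xi> + v2 mu S) * inv_ee"
    unfolding inv_em_def inv_ee_def by (simp add: inner_commute)
  also have "\<dots> = ((inv_ee * \<xi> - inv_em) * inv_em + (- inv_em * \<xi> + inv_mm) * inv_ee) / uq mu S"
    using uq_pos by (simp add: v_eq field_simps)
  also have "\<dots> = 1" using uq_pos by (simp add: uq_eq power2_eq_square algebra_simps)
  finally show ?thesis .
qed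

lemma w_of_inner_mu: "w_of mu S \<xi> \<bullet> mu = \<xi>"
proof -
  have "w_of mu S \<xi> \<bullet> mu = (v0 mu S * \<xi> - v1 mu S) * ((Sinv *v mu) \<bullet> mu)
                               + (- v1 mu S * \<xi> + v2 mu S) * ((Sinv *v 1) \<bullet> mu)"
    unfolding w_of_def vec_1_eq_1 by (simp add: inner_add_left)
  also have "\<dots> = (v0 mu S * \<xi> - v1 mu S) * inv_mm + (- v1 mu S * \<xi> + v2 mu S) * inv_em"
    unfolding inv_em_def inv_mm_def using inner_Sinv_commute[of 1 mu] by (simp add: inner_commute)
  also have "\<dots> = ((inv_ee * \<xi> - inv_em) * inv_mm + (- inv_em * \<xi> + inv_mm) * inv_em) / uq mu S"
    using uq_pos by (simp add: v_eq field_simps)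
  also have "\<dots> = \<xi>" using uq_pos by (simp add: uq_eq power2_eq_square field_simps)
  finally show ?thesis .
qed

lemma S_w_of: "S *v w_of mu S \<xi> = (v0 mu S * \<xi> - v1 mu S) *\<^sub>R mu + (- v1 mu S * \<xi> + v2 mu S) *\<^sub>R 1"
  unfolding w_of_def vec_1_eq_1
  by (simp add: matrix_vector_right_distrib matrix_vector_mult_scaleR S_Sinv)

lemma variance_w_of: "w_of mu S \<xi> \<bullet> (S *v w_of mu S \<xi>) = frontier_var \<xi>"
  unfolding S_w_of frontier_var_def
  by (simp add: w_of_inner_1 w_of_inner_mu power2_eq_square algebra_simps)

lemma frontier_var_pos: "frontier_var \<xi> > 0"
  using S_pos[of "w_of mu S \<xi>"] w_of_inner_1[of \<xi>] variance_w_of[of \<xi>] by fastforce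

text \<open>\<open>w_of mu S \<xi>\<close> is the unique minimum-variance portfolio with mean \<open>\<xi>\<close>: the difference
  \<open>d\<close> to any other such portfolio is \<open>S\<close>-orthogonal to it, since \<open>S *v w_of mu S \<xi>\<close> lies in the
  span of \<open>mu\<close> and \<open>1\<close>.\<close>

lemma frontier_var_le_variance:
  assumes "w \<bullet> 1 = 1" "w \<bullet> mu = \<xi>"
  shows "frontier_var \<xi> \<le> w \<bullet> (S *v w)"
    and "w \<bullet> (S *v w) = frontier_var \<xi> \<Longrightarrow> w = w_of mu S \<xi>"
proof -
  define d where "d = w - w_of mu S \<xi>"
  have "d \<bullet> 1 = 0" "d \<bullet> mu = 0"
    unfolding d_def using assms w_of_inner_1 w_of_inner_mu by (simp_all add: inner_diff_left)
  then have "d \<bullet> (S *v w_of mu S \<xi>) = 0" unfolding S_w_of by (simp add: inner_add_right)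
  moreover have "w_of mu S \<xi> \<bullet> (S *v d) = d \<bullet> (S *v w_of mu S \<xi>)"
    using inner_matrix_vector_commute[OF S_sym] .
  moreover have "w = w_of mu S \<xi> + d" unfolding d_def by simp
  ultimately have split: "w \<bullet> (S *v w) = frontier_var \<xi> + d \<bullet> (S *v d)"
    by (simp add: algebra_simps variance_w_of)
  have "d \<bullet> (S *v d) \<ge> 0" using S_pos[of d] by (cases "d = 0") auto
  then show "frontier_var \<xi> \<le> w \<bullet> (S *v w)" unfolding split by simp
  assume "w \<bullet> (S *v w) = frontier_var \<xi>"
  then have "d = 0" using S_pos[of d] split by fastforce
  then show "w = w_of mu S \<xi>" unfolding d_def by simp
qed

text \<open>\<open>sqrt \<circ> frontier_var\<close> is strictly convex: \<open>frontier_var\<close> is a positive definite quadratic form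
  in \<open>(\<xi>, 1)\<close>, and \<open>B\<close> below is the associated bilinear form.\<close>

lemma sqrt_frontier_var_midpoint_strict:
  assumes "a \<noteq> b"
  shows "sqrt (frontier_var ((a + b)/2)) < (sqrt (frontier_var a) + sqrt (frontier_var b)) / 2"
proof -
  define B where "B = v0 mu S * a * b - v1 mu S * (a + b) + v2 mu S"
  have "frontier_var a * frontier_var b - B^2 = (v0 mu S * v2 mu S - (v1 mu S)^2) * (a - b)^2"
    unfolding frontier_var_def B_def by algebra
  moreover have "(v0 mu S * v2 mu S - (v1 mu S)^2) * (a - b)^2 > 0"
    using v_det_pos assms by simp
  ultimately have "B^2 < (sqrt (frontier_var a) * sqrt (frontier_var b))^2"
    using frontier_var_pos by (simp add: power_mult_distrib less_imp_le)
  then have B: "B < sqrt (frontier_var a) * sqrt (frontier_var b)"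
    using frontier_var_pos by (smt (verit) real_sqrt_gt_zero mult_pos_pos power2_less_imp_less)
  have "4 * frontier_var ((a + b)/2) = frontier_var a + frontier_var b + 2 * B"
    unfolding frontier_var_def B_def by (simp add: power2_eq_square field_simps)
  then have "frontier_var ((a + b)/2) < ((sqrt (frontier_var a) + sqrt (frontier_var b)) / 2)^2"
    using B frontier_var_pos by (simp add: power2_eq_square field_simps less_imp_le)
  then have "sqrt (frontier_var ((a + b)/2))
               < sqrt (((sqrt (frontier_var a) + sqrt (frontier_var b)) / 2)^2)"
    by (rule real_sqrt_less_mono)
  then show ?thesis using frontier_var_pos by (simp add: less_imp_le)
qed

lemma phi_eq_worst_sym: "phi mu S t \<xi> = worst_sym (\<xi> - t) (sqrt (frontier_var \<xi>))"
  unfolding phi_def frontier_var_def[symmetric]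
  using frontier_var_pos by (simp add: hS_eq_worst_sym)

lemma worst_obj_w_of: "worst_obj mu S t (w_of mu S \<xi>) = phi mu S t \<xi>"
  using worst_obj_eq_worst_sym[OF pos_def, of "w_of mu S \<xi>" mu t]
  by (simp add: variance_w_of frontier_var_pos w_of_inner_mu phi_eq_worst_sym)

text \<open>By strict monotonicity in the standard deviation, a portfolio can only match the frontier
  portfolio of the same mean by being it.\<close>

lemma phi_le_worst_obj:
  assumes "w \<bullet> 1 = 1"
  shows "phi mu S t (w \<bullet> mu) \<le> worst_obj mu S t w"
    and "worst_obj mu S t w = phi mu S t (w \<bullet> mu) \<Longrightarrow> w = w_of mu S (w \<bullet> mu)"
proof -
  have "w \<noteq> 0" using assms by auto
  then have w: "w \<bullet> (S *v w) > 0" by (rule S_pos)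
  have obj: "worst_obj mu S t w = worst_sym (w \<bullet> mu - t) (sqrt (w \<bullet> (S *v w)))"
    by (rule worst_obj_eq_worst_sym[OF pos_def w])
  have le: "frontier_var (w \<bullet> mu) \<le> w \<bullet> (S *v w)"
    by (rule frontier_var_le_variance(1)[OF assms refl])
  have strict: "phi mu S t (w \<bullet> mu) < worst_obj mu S t w" if "frontier_var (w \<bullet> mu) < w \<bullet> (S *v w)"
    unfolding obj phi_eq_worst_sym using that frontier_var_pos
    by (intro worst_sym_strict_mono) auto
  show "phi mu S t (w \<bullet> mu) \<le> worst_obj mu S t w"
    using strict le by (cases "frontier_var (w \<bullet> mu) = w \<bullet> (S *v w)")
      (auto simp: obj phi_eq_worst_sym)
  assume "worst_obj mu S t w = phi mu S t (w \<bullet> mu)"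
  then have "w \<bullet> (S *v w) = frontier_var (w \<bullet> mu)" using strict le by fastforce
  then show "w = w_of mu S (w \<bullet> mu)" by (rule frontier_var_le_variance(2)[OF assms refl])
qed

lemma phi_midpoint_strict:
  assumes "a \<noteq> b"
  shows "phi mu S t ((a + b)/2) < (phi mu S t a + phi mu S t b)/2"
proof -
  have "phi mu S t ((a + b)/2) = worst_sym ((a - t + (b - t))/2) (sqrt (frontier_var ((a + b)/2)))"
    unfolding phi_eq_worst_sym by (simp add: field_simps)
  also have "\<dots> < worst_sym ((a - t + (b - t))/2) ((sqrt (frontier_var a) + sqrt (frontier_var b)) / 2)"
    using sqrt_frontier_var_midpoint_strict[OF assms] frontier_var_pos
    by (intro worst_sym_strict_mono) auto
  also have "\<dots> \<le> (phi mu S t a + phi mu S t b)/2"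
    unfolding phi_eq_worst_sym using frontier_var_pos by (intro worst_sym_midpoint_convex) auto
  finally show ?thesis .
qed

lemma optimal_w_of_arg_min:
  assumes "is_arg_min (phi mu S t) (\<lambda>\<xi>. \<xi> \<le> nu) \<xi>"
  shows "optimal mu S t nu (w_of mu S \<xi>)"
    and "optimal mu S t nu w \<Longrightarrow> w = w_of mu S \<xi>"
proof -
  have \<xi>: "\<xi> \<le> nu" "\<And>\<eta>. \<eta> \<le> nu \<Longrightarrow> phi mu S t \<xi> \<le> phi mu S t \<eta>"
    using assms unfolding is_arg_min_linorder by auto
  have feasible_iff: "feasible mu nu w \<longleftrightarrow> w \<bullet> 1 = 1 \<and> w \<bullet> mu \<le> nu" for w
    unfolding feasible_def vec_1_eq_1 ..
  have feasible: "feasible mu nu (w_of mu S \<xi>)"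
    using \<xi>(1) by (simp add: feasible_iff w_of_inner_1 w_of_inner_mu)
  have le: "worst_obj mu S t (w_of mu S \<xi>) \<le> worst_obj mu S t w" if "feasible mu nu w" for w
    using that \<xi>(2)[of "w \<bullet> mu"] phi_le_worst_obj(1)[of w t]
    by (simp add: feasible_iff worst_obj_w_of)
  show "optimal mu S t nu (w_of mu S \<xi>)"
    unfolding optimal_def using feasible le by blast
  assume opt: "optimal mu S t nu w"
  then have w: "w \<bullet> 1 = 1" "w \<bullet> mu \<le> nu" unfolding optimal_def feasible_iff by auto
  have w_le: "worst_obj mu S t w \<le> phi mu S t \<xi>"
    using opt feasible unfolding optimal_def by (metis worst_obj_w_of)
  have "w \<bullet> mu = \<xi>"
  proof (rule ccontr)
    assume "w \<bullet> mu \<noteq> \<xi>"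
    then have "phi mu S t ((w \<bullet> mu + \<xi>)/2) < (phi mu S t (w \<bullet> mu) + phi mu S t \<xi>)/2"
      by (rule phi_midpoint_strict)
    moreover have "phi mu S t \<xi> \<le> phi mu S t ((w \<bullet> mu + \<xi>)/2)" using \<xi> w by simp
    ultimately show False using phi_le_worst_obj(1)[OF w(1), of t] w_le by simp
  qed
  moreover have "worst_obj mu S t w = phi mu S t (w \<bullet> mu)"
    using phi_le_worst_obj(1)[OF w(1), of t] w_le \<xi>(2)[OF w(2)] by simp
  ultimately show "w = w_of mu S \<xi>" using phi_le_worst_obj(2)[OF w(1)] by simp
qed

lemma phi_below_threshold: "\<xi> \<le> t \<Longrightarrow> phi mu S t \<xi> = frontier_var \<xi> / 2"
  unfolding phi_eq_worst_sym using frontier_var_pos[of \<xi>] by (simp add: worst_sym_nonpos)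

lemma frontier_var_min_le:
  assumes "\<xi> \<le> B"
  shows "frontier_var (min (v1 mu S / v0 mu S) B) \<le> frontier_var \<xi>"
proof -
  define m where "m = v1 mu S / v0 mu S"
  have vertex: "frontier_var x = v0 mu S * (x - m)^2 + (v2 mu S - (v1 mu S)^2 / v0 mu S)" for x
    unfolding frontier_var_def m_def using v0_pos by (simp add: power2_eq_square field_simps)
  have "(min m B - m)^2 \<le> (\<xi> - m)^2"
  proof (cases "m \<le> B")
    case False
    then have "(m - B)^2 \<le> (m - \<xi>)^2" using assms by (intro power_mono) auto
    then show ?thesis using False by (simp add: power2_commute)
  qed simp
  then show ?thesis unfolding vertex m_def[symmetric] using v0_pos by simp
qed

lemma is_arg_min_phi_below_threshold:
  assumes "B \<le> t"
  shows "is_arg_min (phi mu S t) (\<lambda>\<xi>. \<xi> \<le> B) (min (v1 mu S / v0 mu S) B)"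
  unfolding is_arg_min_linorder using assms frontier_var_min_le
  by (simp add: phi_below_threshold)

lemma h1_eq_phi: "h1 mu S t = phi mu S t (min (v1 mu S / v0 mu S) t)"
  unfolding h1_def Let_def frontier_var_def[symmetric] by (simp add: phi_below_threshold)

lemma continuous_on_phi: "continuous_on A (phi mu S t)"
proof -
  have "continuous_on A (\<lambda>\<xi>. worst_sym (\<xi> - t) (sqrt (frontier_var \<xi>)))"
    unfolding frontier_var_def by (intro continuous_intros)
  then show ?thesis unfolding phi_eq_worst_sym[abs_def] .
qed

lemma h2_attained:
  assumes "t \<le> nu"
  shows "\<exists>\<xi>\<in>{t..nu}. phi mu S t \<xi> = h2 mu S t nu" and "\<xi> \<in> {t..nu} \<Longrightarrow> h2 mu S t nu \<le> phi mu S t \<xi>"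
proof -
  obtain \<xi>0 where \<xi>0: "\<xi>0 \<in> {t..nu}" "\<And>\<xi>. \<xi> \<in> {t..nu} \<Longrightarrow> phi mu S t \<xi>0 \<le> phi mu S t \<xi>"
    using continuous_attains_inf[of "{t..nu}" "phi mu S t"] assms continuous_on_phi by auto
  then have "h2 mu S t nu = phi mu S t \<xi>0"
    unfolding h2_def by (intro cInf_eq_minimum) auto
  then show "\<exists>\<xi>\<in>{t..nu}. phi mu S t \<xi> = h2 mu S t nu" and "\<xi> \<in> {t..nu} \<Longrightarrow> h2 mu S t nu \<le> phi mu S t \<xi>"
    using \<xi>0 by auto
qed

lemma is_arg_min_phi_if_le_h1_h2:
  assumes "t \<le> nu" "\<xi> \<le> nu" "phi mu S t \<xi> \<le> min (h1 mu S t) (h2 mu S t nu)"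
  shows "is_arg_min (phi mu S t) (\<lambda>\<xi>. \<xi> \<le> nu) \<xi>"
  unfolding is_arg_min_linorder
proof (intro conjI allI impI)
  fix \<eta> assume "\<eta> \<le> nu"
  show "phi mu S t \<xi> \<le> phi mu S t \<eta>"
  proof (cases "\<eta> \<le> t")
    case True
    then have "h1 mu S t \<le> phi mu S t \<eta>"
      using is_arg_min_phi_below_threshold[of t t] unfolding h1_eq_phi is_arg_min_linorder by simp
    then show ?thesis using assms(3) by simp
  next
    case False
    then show ?thesis using h2_attained(2)[OF assms(1), of \<eta>] \<open>\<eta> \<le> nu\<close> assms(3) by simp
  qed
qed (use assms in simp)

end

theorem proposition5:
  fixes mu :: "real^'n" and S :: "real^'n^'n" and t nu :: real
  assumes "CARD('n) \<ge> 2"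
    and "pos_def_mat S"
    and "\<forall>c::real. mu \<noteq> c *\<^sub>R vec 1"
  shows "(\<exists>!w. optimal mu S t nu w) \<and>
         (t \<ge> nu \<longrightarrow> optimal mu S t nu (w_of mu S (min (v1 mu S / v0 mu S) nu))) \<and>
         (t < nu \<longrightarrow>
            (\<exists>\<xi>\<in>{t..nu}. phi mu S t \<xi> = h2 mu S t nu) \<and>
            (h1 mu S t \<le> h2 mu S t nu \<longrightarrow>
               optimal mu S t nu (w_of mu S (min (v1 mu S / v0 mu S) t))) \<and>
            (h1 mu S t > h2 mu S t nu \<longrightarrow>
               (\<forall>\<xi>2\<in>{t..nu}. phi mu S t \<xi>2 = h2 mu S t nu \<longrightarrow>
                  optimal mu S t nu (w_of mu S \<xi>2))))"
proof -
  interpret frontier mu S using assms(2,3) by unfold_locales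
  let ?m = "v1 mu S / v0 mu S"
  have unique: "\<exists>!w. optimal mu S t nu w" if "is_arg_min (phi mu S t) (\<lambda>\<xi>. \<xi> \<le> nu) \<xi>" for \<xi>
    using optimal_w_of_arg_min[OF that] by blast
  show ?thesis
  proof (cases "nu \<le> t")
    case True
    then show ?thesis
      using is_arg_min_phi_below_threshold[OF True] unique optimal_w_of_arg_min(1) by auto
  next
    case False
    then have "t \<le> nu" by simp
    then obtain \<xi>2 where \<xi>2: "\<xi>2 \<in> {t..nu}" "phi mu S t \<xi>2 = h2 mu S t nu"
      using h2_attained(1) by blast
    have low: "is_arg_min (phi mu S t) (\<lambda>\<xi>. \<xi> \<le> nu) (min ?m t)" if "h1 mu S t \<le> h2 mu S t nu"
      using \<open>t \<le> nu\<close> that by (intro is_arg_min_phi_if_le_h1_h2) (auto simp: h1_eq_phi)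
    have high: "is_arg_min (phi mu S t) (\<lambda>\<xi>. \<xi> \<le> nu) \<xi>"
      if "h2 mu S t nu < h1 mu S t" "\<xi> \<in> {t..nu}" "phi mu S t \<xi> = h2 mu S t nu" for \<xi>
      using \<open>t \<le> nu\<close> that by (intro is_arg_min_phi_if_le_h1_h2) auto
    have "\<exists>!w. optimal mu S t nu w"
      using unique low high[OF _ \<xi>2] by (cases "h1 mu S t \<le> h2 mu S t nu") auto
    then show ?thesis
      using False \<xi>2 low high optimal_w_of_arg_min(1) by auto
  qed
qed

end
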